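(* Let $\mu>0$, $1<\alpha\le e^2$, $f(x)=xe^{-x}$, and let $\beta\in L^\infty_+(0,+\infty)$ satisfy $\int_0^{\infty}\beta(a)e^{-\mu a}\,da=1$. Consider $$\partial_tu+\partial_au=-\mu u\ (t>0,a>0),\qquad u(t,0)=\alpha f\Big(\int_0^\infty\beta(a)u(t,a)\,da\Big),\qquad u(0,\cdot)=u_0\in L^1_+(0,\infty).$$ Then the positive equilibrium $\bar u(a)=\ln(\alpha)e^{-\mu a}$ is globally asymptotically stable on $\widehat M_0=\{u_0\in L^1_+(0,\infty):\int_0^{a^\star}u_0(a)\,da>0\}$, where $a^\star=\sup\{a>0:\int_a^\infty\beta(\sigma)e^{-\mu\sigma}\,d\sigma>0\}$; in particular the compact global attractor of the semiflow in $\widehat M_0$ is $\{\bar u\}$, so that every solution with $u_0\in\widehat M_0$ converges to $\bar u$ in $L^1(0,\infty)$ as $t\to\infty$.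
   Context: Solutions are understood in the integrated sense: $u(t,a)=e^{-\mu t}u_0(a-t)$ for $a\ge t$ and $u(t,a)=e^{-\mu a}b(t-a)$ for $a\le t$, where $b$ is the unique continuous solution of $b(t)=\alpha f\big(\int_t^\infty\beta(a)e^{-\mu t}u_0(a-t)\,da+\int_0^t\beta(a)e^{-\mu a}b(t-a)\,da\big)$, $t\ge0$. *)

theory Defs
  imports "HOL-Analysis.Analysis"
begin

definition ricker :: "real \<Rightarrow> real" where
  "ricker x = x * exp (- x)"

text \<open>Integrated (mild) solution built from initial datum u0 and boundary flux b.\<close>
definition age_sol :: "real \<Rightarrow> (real \<Rightarrow> real) \<Rightarrow> (real \<Rightarrow> real) \<Rightarrow> real \<Rightarrow> real \<Rightarrow> real" where
  "age_sol \<mu> u0 b t a = (if t \<le> a then exp (- \<mu> * t) * u0 (a - t) else exp (- \<mu> * a) * b (t - a))"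

definition renewal_sol :: "real \<Rightarrow> real \<Rightarrow> (real \<Rightarrow> real) \<Rightarrow> (real \<Rightarrow> real) \<Rightarrow> (real \<Rightarrow> real) \<Rightarrow> bool" where
  "renewal_sol \<mu> \<alpha> \<beta> u0 b \<longleftrightarrow> continuous_on {0..} b \<and>
     (\<forall>t\<ge>0. b t = \<alpha> * ricker
        ((LINT a:{t<..}|lborel. \<beta> a * exp (- \<mu> * t) * u0 (a - t))
         + (LINT a:{0..t}|lborel. \<beta> a * exp (- \<mu> * a) * b (t - a))))"

definition L1_plus :: "(real \<Rightarrow> real) \<Rightarrow> bool" where
  "L1_plus u0 \<longleftrightarrow> set_integrable lborel {0<..} u0 \<and> (AE a in lborel. 0 < a \<longrightarrow> 0 \<le> u0 a)"

definition a_star :: "real \<Rightarrow> (real \<Rightarrow> real) \<Rightarrow> ereal" where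
  "a_star \<mu> \<beta> = (SUP a \<in> {a. 0 < a \<and> (LINT s:{a<..}|lborel. \<beta> s * exp (- \<mu> * s)) > 0}. ereal a)"

definition M0_hat :: "real \<Rightarrow> (real \<Rightarrow> real) \<Rightarrow> (real \<Rightarrow> real) set" where
  "M0_hat \<mu> \<beta> = {u0. L1_plus u0 \<and>
      (LINT a:{a. 0 < a \<and> ereal a < a_star \<mu> \<beta>}|lborel. u0 a) > 0}"

definition L1_dist :: "(real \<Rightarrow> real) \<Rightarrow> (real \<Rightarrow> real) \<Rightarrow> real" where
  "L1_dist u v = (LINT a:{0<..}|lborel. \<bar>u a - v a\<bar>)"

end

theory Submission
  imports Defs
begin

text \<open>Along characteristics the problem reduces to the boundary flux \<open>b(t) = u(t, 0)\<close>, which solves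
  the renewal equation \<open>b(t) = \<alpha> f(F(t) + \<integral>\<^sub>0\<^sup>t k(a) b(t - a) da)\<close> with the probability density
  \<open>k(a) = \<beta>(a) e\<^sup>-\<^sup>\<mu>\<^sup>a\<close> and a forcing \<open>F\<close> from the initial datum that decays like \<open>e\<^sup>-\<^sup>\<mu>\<^sup>t\<close>. For
  \<open>\<alpha> \<le> e\<^sup>2\<close> the map \<open>y \<mapsto> \<alpha> f(y)\<close> moves every \<open>y > 0\<close> strictly closer to its fixed point \<open>ln \<alpha>\<close>,
  uniformly on compact sets avoiding \<open>ln \<alpha>\<close>, and convolution with \<open>k\<close> only averages past values of \<open>b\<close>.
  A first-exit argument therefore keeps \<open>b\<close> close to \<open>ln \<alpha>\<close> when \<open>u\<^sub>0\<close> is \<open>L\<^sup>1\<close>-close to \<open>ubar\<close>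
  (stability). If \<open>u\<^sub>0\<close> has mass below \<open>a\<^sup>\<star>\<close>, then \<open>F\<close> is positive somewhere, positivity of \<open>b\<close>
  spreads along the support of \<open>k\<close>, and \<open>b\<close> is eventually bounded below; then the smallest eventual
  bound on \<open>|b - ln \<alpha>|\<close> cannot be positive, since the contraction would improve it (attractivity).
  Finally \<open>\<parallel>u(t) - ubar\<parallel>\<^sub>1\<close> is at most \<open>e\<^sup>-\<^sup>\<mu>\<^sup>t \<parallel>u\<^sub>0 - ubar\<parallel>\<^sub>1 + \<integral>\<^sub>0\<^sup>t e\<^sup>-\<^sup>\<mu>\<^sup>a |b(t - a) - ln \<alpha>| da\<close>.\<close>

lemma ricker_le_exp_minus_one: "ricker x \<le> exp (-1)"
proof -
  have "x \<le> exp (x - 1)" using exp_ge_add_one_self[of "x - 1"] by simp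
  hence "x * exp (- x) \<le> exp (x - 1) * exp (- x)" by (simp add: mult_right_mono)
  also have "\<dots> = exp (-1)" by (simp flip: exp_add)
  finally show ?thesis by (simp add: ricker_def)
qed

lemma ricker_pos: "0 < x \<Longrightarrow> 0 < ricker x"
  by (simp add: ricker_def)

lemma ricker_nonneg: "0 \<le> x \<Longrightarrow> 0 \<le> ricker x"
  by (simp add: ricker_def)

lemma ricker_neg_le:
  assumes "0 < \<alpha>" "\<alpha> * ricker x = - m" "- y \<le> x" "0 \<le> y"
  shows "m \<le> \<alpha> * (y * exp y)"
proof (cases "0 \<le> x")
  case True
  have "0 \<le> \<alpha> * ricker x" "0 \<le> \<alpha> * (y * exp y)" using assms(1,4) ricker_nonneg[OF True] by simp_all
  thus ?thesis using assms(2) by simp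
next
  case False
  hence "\<alpha> * ((- x) * exp (- x)) \<le> \<alpha> * (y * exp y)"
    using assms(1,3) by (intro mult_left_mono mult_mono) auto
  thus ?thesis using assms(2) by (simp add: ricker_def)
qed

lemma continuous_on_ricker: "continuous_on S ricker"
  unfolding ricker_def by (intro continuous_intros)

lemma exp_less_one_plus_mult_exp:
  fixes h :: real assumes "0 < h" shows "exp h < 1 + h * exp h"
proof -
  let ?f = "\<lambda>x::real. 1 - exp x + x * exp x"
  have "?f 0 < ?f h"
  proof (rule DERIV_pos_imp_increasing_open[OF assms])
    fix x :: real assume "0 < x" "x < h"
    moreover have "(?f has_real_derivative x * exp x) (at x)"
      by (auto intro!: derivative_eq_intros simp: algebra_simps)
    ultimately show "\<exists>y. (?f has_real_derivative y) (at x) \<and> 0 < y" by auto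
  qed (intro continuous_intros)
  thus ?thesis by simp
qed

lemma two_mult_exp_minus_one_less:
  fixes h :: real assumes "0 < h" shows "2 * (exp h - 1) < h * (1 + exp h)"
proof -
  let ?f = "\<lambda>x::real. x * (1 + exp x) - 2 * (exp x - 1)"
  have "?f 0 < ?f h"
  proof (rule DERIV_pos_imp_increasing_open[OF assms])
    fix x :: real assume "0 < x" "x < h"
    moreover have "(?f has_real_derivative 1 - exp x + x * exp x) (at x)"
      by (auto intro!: derivative_eq_intros simp: algebra_simps)
    ultimately show "\<exists>y. (?f has_real_derivative y) (at x) \<and> 0 < y"
      using exp_less_one_plus_mult_exp[of x] by auto
  qed (intro continuous_intros)
  thus ?thesis by simp
qed

lemma ricker_shift_fixpoint:
  assumes "1 < \<alpha>" shows "\<alpha> * ricker (ln \<alpha> + h) = (ln \<alpha> + h) * exp (- h)"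
  using assms by (simp add: ricker_def exp_diff exp_minus field_simps)

text \<open>The hypothesis \<open>\<alpha> \<le> e\<^sup>2\<close> enters the development only here, as \<open>ln \<alpha> \<le> 2\<close> in \<open>gap\<close>.\<close>

lemma ricker_dist_fixpoint_less:
  assumes \<alpha>: "1 < \<alpha>" "\<alpha> \<le> exp 2" and y: "0 < y" "y \<noteq> ln \<alpha>"
  shows "\<bar>\<alpha> * ricker y - ln \<alpha>\<bar> < \<bar>y - ln \<alpha>\<bar>"
proof -
  define L where "L = ln \<alpha>"
  have "L \<le> 2" using \<alpha> unfolding L_def by (metis ln_exp ln_le_cancel_iff exp_gt_zero less_trans zero_less_one)
  have gap: "(L - h) * exp h < L + h" if "0 < h" for h
  proof -
    have "L * (exp h - 1) \<le> 2 * (exp h - 1)" using \<open>L \<le> 2\<close> that by (intro mult_right_mono) auto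
    with two_mult_exp_minus_one_less[OF that] show ?thesis by (simp add: algebra_simps)
  qed
  show ?thesis
  proof (cases "L < y")
    case True
    define h where "h = y - L"
    have h: "0 < h" "y = L + h" using True h_def by auto
    have eq: "\<alpha> * ricker y = (L + h) * exp (- h)" using ricker_shift_fixpoint[OF \<alpha>(1)] h L_def by simp
    have "(L + h) * exp (- h) < L + h" using h y by (simp add: mult_less_cancel_left1)
    moreover have "L - h < (L + h) * exp (- h)"
    proof -
      have "(L - h) * exp h * exp (- h) < (L + h) * exp (- h)"
        using gap[OF h(1)] by (intro mult_strict_right_mono) auto
      thus ?thesis by (simp add: mult.assoc flip: exp_add)
    qed
    ultimately show ?thesis unfolding eq L_def[symmetric] using h by auto
  next
    case False
    define h where "h = L - y"
    have h: "0 < h" "y = L - h" using False y h_def L_def by auto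
    have eq: "\<alpha> * ricker y = (L - h) * exp h"
      using ricker_shift_fixpoint[OF \<alpha>(1), of "- h"] h L_def by simp
    have "L - h < (L - h) * exp h" using h y by simp
    with gap[OF h(1)] show ?thesis unfolding eq L_def[symmetric] using h by auto
  qed
qed

lemma ricker_dist_fixpoint_le:
  assumes "1 < \<alpha>" "\<alpha> \<le> exp 2" "0 < y"
  shows "\<bar>\<alpha> * ricker y - ln \<alpha>\<bar> \<le> \<bar>y - ln \<alpha>\<bar>"
proof (cases "y = ln \<alpha>")
  case True
  thus ?thesis using ricker_shift_fixpoint[OF assms(1), of 0] by simp
qed (use ricker_dist_fixpoint_less[OF assms] in auto)

lemma ricker_dist_fixpoint_uniform:
  assumes \<alpha>: "1 < \<alpha>" "\<alpha> \<le> exp 2"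
    and S: "compact S" "\<And>y. y \<in> S \<Longrightarrow> 0 < y \<and> y \<noteq> ln \<alpha>"
  shows "\<exists>\<theta>>0. \<forall>y\<in>S. \<bar>\<alpha> * ricker y - ln \<alpha>\<bar> \<le> \<bar>y - ln \<alpha>\<bar> - \<theta>"
proof (cases "S = {}")
  case False
  have "continuous_on S (\<lambda>y. \<bar>y - ln \<alpha>\<bar> - \<bar>\<alpha> * ricker y - ln \<alpha>\<bar>)"
    unfolding ricker_def by (intro continuous_intros)
  from continuous_attains_inf[OF S(1) False this] obtain y0 where y0: "y0 \<in> S"
    "\<And>y. y \<in> S \<Longrightarrow> \<bar>y0 - ln \<alpha>\<bar> - \<bar>\<alpha> * ricker y0 - ln \<alpha>\<bar> \<le> \<bar>y - ln \<alpha>\<bar> - \<bar>\<alpha> * ricker y - ln \<alpha>\<bar>"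
    by blast
  moreover have "\<bar>\<alpha> * ricker y0 - ln \<alpha>\<bar> < \<bar>y0 - ln \<alpha>\<bar>"
    using ricker_dist_fixpoint_less[OF \<alpha>] S(2)[OF y0(1)] by auto
  ultimately show ?thesis by (intro exI[of _ "\<bar>y0 - ln \<alpha>\<bar> - \<bar>\<alpha> * ricker y0 - ln \<alpha>\<bar>"]) force
qed (auto intro: exI[of _ 1])

lemma ricker_dist_fixpoint_annulus:
  assumes \<alpha>: "1 < \<alpha>" "\<alpha> \<le> exp 2" and e: "0 < e" "2 * e < ln \<alpha>"
  shows "\<exists>\<theta>>0. \<forall>y. e \<le> \<bar>y - ln \<alpha>\<bar> \<and> \<bar>y - ln \<alpha>\<bar> \<le> 2 * e \<longrightarrow>
           \<bar>\<alpha> * ricker y - ln \<alpha>\<bar> \<le> \<bar>y - ln \<alpha>\<bar> - \<theta>"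
proof -
  define S where "S = {ln \<alpha> - 2 * e .. ln \<alpha> - e} \<union> {ln \<alpha> + e .. ln \<alpha> + 2 * e}"
  have "compact S" unfolding S_def by (intro compact_Un compact_Icc)
  moreover have "0 < y \<and> y \<noteq> ln \<alpha>" if "y \<in> S" for y using that e unfolding S_def by auto
  ultimately obtain \<theta> where "0 < \<theta>" "\<forall>y\<in>S. \<bar>\<alpha> * ricker y - ln \<alpha>\<bar> \<le> \<bar>y - ln \<alpha>\<bar> - \<theta>"
    using ricker_dist_fixpoint_uniform[OF \<alpha>] by blast
  moreover have "y \<in> S" if "e \<le> \<bar>y - ln \<alpha>\<bar>" "\<bar>y - ln \<alpha>\<bar> \<le> 2 * e" for y
    using that unfolding S_def by (auto simp: abs_if split: if_splits)
  ultimately show ?thesis by blast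
qed

lemma sqrt_mult_le_ricker:
  assumes \<alpha>: "1 < \<alpha>" and y: "0 \<le> y" "y \<le> ln \<alpha> / 2"
  shows "sqrt \<alpha> * y \<le> \<alpha> * ricker y"
proof -
  have "(exp (ln \<alpha> / 2))\<^sup>2 = \<alpha>" using \<alpha> by (simp add: power2_eq_square flip: exp_add)
  hence sqrt: "exp (ln \<alpha> / 2) = sqrt \<alpha>" by (intro real_sqrt_unique[symmetric]) auto
  have "inverse (sqrt \<alpha>) \<le> exp (- y)" using y by (simp add: exp_minus flip: sqrt)
  hence "\<alpha> * inverse (sqrt \<alpha>) \<le> \<alpha> * exp (- y)" using \<alpha> by simp
  moreover have "\<alpha> * inverse (sqrt \<alpha>) = sqrt \<alpha>" using \<alpha> real_div_sqrt[of \<alpha>] by (simp add: divide_inverse)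
  ultimately have "sqrt \<alpha> * y \<le> \<alpha> * exp (- y) * y" using y by (intro mult_right_mono) auto
  thus ?thesis by (simp add: ricker_def algebra_simps)
qed

lemma ricker_ge_min_sqrt_mult:
  assumes \<alpha>: "1 < \<alpha>"
  shows "\<exists>c>0. \<forall>y. 0 \<le> y \<and> y \<le> Y \<longrightarrow> min (sqrt \<alpha> * y) c \<le> \<alpha> * ricker y"
proof -
  obtain c where c: "0 < c" "\<And>y. ln \<alpha> / 2 \<le> y \<Longrightarrow> y \<le> Y \<Longrightarrow> c \<le> \<alpha> * ricker y"
  proof (cases "ln \<alpha> / 2 \<le> Y")
    case True
    have "continuous_on {ln \<alpha> / 2..Y} (\<lambda>y. \<alpha> * ricker y)"
      by (intro continuous_intros continuous_on_ricker)
    from continuous_attains_inf[OF compact_Icc _ this] True obtain y0 where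
      "y0 \<in> {ln \<alpha> / 2..Y}" "\<And>y. y \<in> {ln \<alpha> / 2..Y} \<Longrightarrow> \<alpha> * ricker y0 \<le> \<alpha> * ricker y" by auto
    moreover have "0 < \<alpha> * ricker y0" using calculation(1) \<alpha> ricker_pos[of y0] ln_gt_zero[OF \<alpha>] by simp
    ultimately show ?thesis using that by auto
  qed (rule that[of 1], auto)
  have "min (sqrt \<alpha> * y) c \<le> \<alpha> * ricker y" if "0 \<le> y" "y \<le> Y" for y
  proof (cases "y \<le> ln \<alpha> / 2")
    case True thus ?thesis using sqrt_mult_le_ricker[OF \<alpha> that(1)] by simp
  next
    case False
    hence "c \<le> \<alpha> * ricker y" using c(2) that(2) by simp
    thus ?thesis by simp
  qed
  with c(1) show ?thesis by blast
qed

lemma set_integral_nonneg: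
  fixes f :: "'a \<Rightarrow> real"
  assumes "\<And>x. x \<in> A \<Longrightarrow> 0 \<le> f x"
  shows "0 \<le> (LINT x:A|M. f x)"
  unfolding set_lebesgue_integral_def
  by (rule Bochner_Integration.integral_nonneg) (use assms in \<open>auto simp: indicator_def\<close>)

lemma set_integral_subset_mono:
  fixes f :: "real \<Rightarrow> real"
  assumes "set_integrable lborel T f" "S \<in> sets borel" "T \<in> sets borel" "S \<subseteq> T"
    and "\<And>x. x \<in> T \<Longrightarrow> 0 \<le> f x"
  shows "(LINT x:S|lborel. f x) \<le> (LINT x:T|lborel. f x)"
proof -
  have "(LINT x:T|lborel. f x) = (LINT x:S \<union> (T - S)|lborel. f x)"
    using assms(4) by (simp add: Un_absorb1)
  also have "\<dots> = (LINT x:S|lborel. f x) + (LINT x:T - S|lborel. f x)"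
    by (rule set_integral_Un) (use assms in \<open>auto intro: set_integrable_subset\<close>)
  finally show ?thesis using set_integral_nonneg[of "T - S" f lborel] assms(5) by simp
qed

lemma set_integral_Icc_split:
  fixes f :: "real \<Rightarrow> real"
  assumes "set_integrable lborel {a..b} f" "a \<le> s" "s \<le> b"
  shows "(LINT x:{a..b}|lborel. f x) = (LINT x:{a..s}|lborel. f x) + (LINT x:{s<..b}|lborel. f x)"
proof -
  have "{a..b} = {a..s} \<union> {s<..b}" using assms by auto
  moreover have "set_integrable lborel {a..s} f" "set_integrable lborel {s<..b} f"
    by (rule set_integrable_subset[OF assms(1)]; use assms in auto)+
  moreover have "{a..s} \<inter> {s<..b} = {}" "{a<..s} \<inter> {s<..b} = {}" by auto
  ultimately show ?thesis using set_integral_Un[of "{a..s}" "{s<..b}" lborel f] by auto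
qed

lemma set_integral_Ioc_split:
  fixes f :: "real \<Rightarrow> real"
  assumes "set_integrable lborel {a<..b} f" "a \<le> s" "s \<le> b"
  shows "(LINT x:{a<..b}|lborel. f x) = (LINT x:{a<..s}|lborel. f x) + (LINT x:{s<..b}|lborel. f x)"
proof -
  have "{a<..b} = {a<..s} \<union> {s<..b}" using assms by auto
  moreover have "set_integrable lborel {a<..s} f" "set_integrable lborel {s<..b} f"
    by (rule set_integrable_subset[OF assms(1)]; use assms in auto)+
  moreover have "{a..s} \<inter> {s<..b} = {}" "{a<..s} \<inter> {s<..b} = {}" by auto
  ultimately show ?thesis using set_integral_Un[of "{a<..s}" "{s<..b}" lborel f] by auto
qed

lemma set_integral_const_Ioc: "a \<le> b \<Longrightarrow> (LINT x:{a<..b}|lborel. (c::real)) = c * (b - a)"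
  by (subst set_integral_const) auto

lemma set_integrable_const_Ioc:
  fixes a b :: real assumes "a \<le> b" shows "set_integrable lborel {a<..b} (\<lambda>_. c :: real)"
proof -
  have "integrable lborel (\<lambda>x. indicator {a<..b} x * c)"
    using assms by (intro integrable_mult_left) (simp add: integrable_indicator_iff)
  thus ?thesis unfolding set_integrable_def by (simp add: mult.commute)
qed

lemma set_integral_shift_Ioi:
  fixes f :: "real \<Rightarrow> real"
  shows "(LINT x:{t<..}|lborel. f x) = (LINT s:{0<..}|lborel. f (s + t))"
  unfolding set_lebesgue_integral_def
  by (subst lborel_integral_real_affine[where c=1 and t=t]) (auto simp: indicator_def add.commute)

lemma tendsto_exp_neg_mult_at_top:
  fixes \<mu> :: real assumes "0 < \<mu>" shows "((\<lambda>t. exp (- \<mu> * t)) \<longlongrightarrow> 0) at_top"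
proof -
  have "filterlim (\<lambda>t. \<mu> * t) at_top at_top"
    by (rule filterlim_tendsto_pos_mult_at_top[OF tendsto_const assms filterlim_ident])
  hence "filterlim (\<lambda>t. - (\<mu> * t)) at_bot at_top"
    using filterlim_uminus_at_top by auto
  from filterlim_compose[OF exp_at_bot this] show ?thesis by simp
qed

lemma set_integrable_exp_neg:
  fixes \<mu> :: real assumes "0 < \<mu>" "S \<in> sets borel" "S \<subseteq> {0..}"
  shows "set_integrable lborel S (\<lambda>a. exp (- \<mu> * a))"
proof -
  have "(\<lambda>x::real. exp (- \<mu> * x)) integrable_on {0..}"
    using has_integral_exp_minus_to_infinity[OF assms(1)] by blast
  hence "(\<lambda>x::real. exp (- \<mu> * x)) absolutely_integrable_on {0..}"
    by (rule nonnegative_absolutely_integrable_1) auto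
  hence "set_integrable lborel {0..} (\<lambda>a. exp (- \<mu> * a))"
    unfolding set_integrable_def by (simp add: integrable_completion)
  thus ?thesis by (rule set_integrable_subset) (use assms in auto)
qed

lemma set_integral_exp_neg_le:
  fixes \<mu> :: real assumes "0 < \<mu>" "S \<in> sets borel" "S \<subseteq> {0..}"
  shows "(LINT a:S|lborel. exp (- \<mu> * a)) \<le> 1 / \<mu>"
proof -
  have "(LINT a:S|lborel. exp (- \<mu> * a)) \<le> (LINT a:{0..}|lborel. exp (- \<mu> * a))"
    by (rule set_integral_subset_mono[OF set_integrable_exp_neg]) (use assms in auto)
  also have "\<dots> = integral {0..} (\<lambda>a. exp (- \<mu> * a))"
    by (rule set_borel_integral_eq_integral(2)[OF set_integrable_exp_neg]) (use assms in auto)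
  also have "\<dots> = 1 / \<mu>"
    using integral_unique[OF has_integral_exp_minus_to_infinity[OF assms(1)]] by simp
  finally show ?thesis .
qed

lemma real_continuous_induct:
  fixes T0 :: real
  assumes step: "\<And>t. T0 \<le> t \<Longrightarrow> (\<And>s. T0 \<le> s \<Longrightarrow> s < t \<Longrightarrow> P s) \<Longrightarrow>
                   \<exists>\<eta>>0. \<forall>s. t \<le> s \<and> s < t + \<eta> \<longrightarrow> P s"
  shows "\<forall>t\<ge>T0. P t"
proof (rule ccontr)
  define Z where "Z = {s. T0 \<le> s \<and> \<not> P s}"
  assume "\<not> (\<forall>t\<ge>T0. P t)"
  then obtain z0 where z0: "z0 \<in> Z" unfolding Z_def by auto
  have bdd: "bdd_below Z" unfolding Z_def by (rule bdd_belowI[of _ T0]) auto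
  define t0 where "t0 = Inf Z"
  have lower: "t0 \<le> z" if "z \<in> Z" for z unfolding t0_def using that bdd by (rule cInf_lower)
  have "T0 \<le> t0" unfolding t0_def using z0 by (intro cInf_greatest) (auto simp: Z_def)
  moreover have "P s" if "T0 \<le> s" "s < t0" for s using lower[of s] that by (auto simp: Z_def)
  ultimately obtain \<eta> where \<eta>: "0 < \<eta>" "\<And>s. t0 \<le> s \<Longrightarrow> s < t0 + \<eta> \<Longrightarrow> P s"
    using step by blast
  have "t0 + \<eta> \<le> z" if "z \<in> Z" for z using \<eta>(2)[of z] lower[OF that] that by (force simp: Z_def)
  hence "t0 + \<eta> \<le> t0" unfolding t0_def using z0 by (intro cInf_greatest) auto
  thus False using \<eta>(1) by simp
qed

lemma L1_dist_nonneg: "0 \<le> L1_dist u v"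
  unfolding L1_dist_def by (rule set_integral_nonneg) simp

lemma set_integrable_exp_weighted_deviation:
  fixes \<mu> L t :: real and b :: "real \<Rightarrow> real"
  assumes "continuous_on {0..} b"
  shows "set_integrable lborel {0<..t} (\<lambda>a. exp (- \<mu> * a) * \<bar>b (t - a) - L\<bar>)"
proof -
  have "continuous_on {0..t} (\<lambda>a. exp (- \<mu> * a) * \<bar>b (t - a) - L\<bar>)"
    by (intro continuous_intros continuous_on_compose2[OF assms]) auto
  thus ?thesis by (rule set_integrable_subset[OF borel_integrable_atLeastAtMost']) auto
qed

lemma tendsto_exp_weighted_deviation:
  fixes \<mu> L M :: real and b :: "real \<Rightarrow> real"
  assumes mu: "0 < \<mu>" and b: "continuous_on {0..} b" "(b \<longlongrightarrow> L) at_top"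
    and bound: "\<And>t. 0 \<le> t \<Longrightarrow> \<bar>b t - L\<bar> \<le> M"
  shows "((\<lambda>t. LINT a:{0<..t}|lborel. exp (- \<mu> * a) * \<bar>b (t - a) - L\<bar>) \<longlongrightarrow> 0) at_top"
proof -
  define g where "g t a = exp (- \<mu> * a) * \<bar>b (t - a) - L\<bar>" for t a
  define s where "s t a = indicator {0<..t} a * g t a" for t a
  define w where "w a = M * (indicator {0..} a *\<^sub>R exp (- \<mu> * a))" for a
  have meas: "s t \<in> borel_measurable lborel" for t
    using borel_measurable_integrable[OF set_integrable_exp_weighted_deviation[OF b(1), unfolded set_integrable_def]]
    by (simp add: s_def[abs_def] g_def)
  have "integrable lborel w"
    using set_integrable_exp_neg[OF mu, of "{0..}"] unfolding w_def set_integrable_def by simp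
  moreover have "AE a in lborel. ((\<lambda>t. s t a) \<longlongrightarrow> 0) at_top"
  proof (intro AE_I2)
    fix a :: real
    show "((\<lambda>t. s t a) \<longlongrightarrow> 0) at_top"
    proof (cases "0 < a")
      case True
      have "filterlim (\<lambda>t. - a + t) at_top at_top"
        by (rule filterlim_tendsto_add_at_top[OF tendsto_const filterlim_ident])
      hence "((\<lambda>t. b (t - a)) \<longlongrightarrow> L) at_top" using filterlim_compose[OF b(2)] by simp
      hence "((\<lambda>t. g t a) \<longlongrightarrow> exp (- \<mu> * a) * \<bar>L - L\<bar>) at_top"
        unfolding g_def by (intro tendsto_intros)
      moreover have "\<forall>\<^sub>F t in at_top. g t a = s t a"
        using eventually_ge_at_top[of a] by eventually_elim (use True in \<open>auto simp: s_def\<close>)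
      ultimately show ?thesis by (auto intro: Lim_transform_eventually)
    qed (simp add: s_def)
  qed
  moreover have "\<forall>\<^sub>F t in at_top. AE a in lborel. norm (s t a) \<le> w a"
  proof (intro eventually_at_top_linorderI[of 0] AE_I2)
    fix t a :: real
    have "0 \<le> M" using bound[of 0] by simp
    thus "norm (s t a) \<le> w a" using bound[of "t - a"]
      by (auto simp: s_def g_def w_def indicator_def abs_mult mult.commute intro!: mult_right_mono)
  qed
  ultimately have "((\<lambda>t. integral\<^sup>L lborel (s t)) \<longlongrightarrow> integral\<^sup>L lborel (\<lambda>_. 0 :: real)) at_top"
    using integral_dominated_convergence_at_top[of "\<lambda>_. 0" lborel s w] meas by simp
  thus ?thesis unfolding s_def g_def set_lebesgue_integral_def by simp
qed

lemma set_integral_exp_weighted_deviation_le: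
  fixes \<mu> L e t :: real and b :: "real \<Rightarrow> real"
  assumes mu: "0 < \<mu>" and t: "0 \<le> t" and b: "continuous_on {0..} b"
    and close: "\<And>s. 0 \<le> s \<Longrightarrow> s \<le> t \<Longrightarrow> \<bar>b s - L\<bar> \<le> e"
  shows "(LINT a:{0<..t}|lborel. exp (- \<mu> * a) * \<bar>b (t - a) - L\<bar>) \<le> e / \<mu>"
proof -
  have e: "0 \<le> e" using close[OF t] t by auto
  have "(LINT a:{0<..t}|lborel. exp (- \<mu> * a) * \<bar>b (t - a) - L\<bar>) \<le> (LINT a:{0<..t}|lborel. e * exp (- \<mu> * a))"
  proof (rule set_integral_mono[OF set_integrable_exp_weighted_deviation[OF b]])
    show "set_integrable lborel {0<..t} (\<lambda>a. e * exp (- \<mu> * a))"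
      using set_integrable_exp_neg[OF mu, of "{0<..t}"] by (auto simp: subset_eq)
    show "exp (- \<mu> * a) * \<bar>b (t - a) - L\<bar> \<le> e * exp (- \<mu> * a)" if "a \<in> {0<..t}" for a
      using close[of "t - a"] that by (simp add: mult.commute mult_left_mono)
  qed
  also have "\<dots> \<le> e * (1 / \<mu>)"
  proof -
    have "(LINT a:{0<..t}|lborel. exp (- \<mu> * a)) \<le> 1 / \<mu>"
      using set_integral_exp_neg_le[OF mu, of "{0<..t}"] by (auto simp: subset_eq)
    thus ?thesis using mult_left_mono[of _ "1 / \<mu>" e] e by simp
  qed
  finally show ?thesis by simp
qed

lemma set_integral_age_sol_tail:
  fixes \<mu> L t :: real and u b :: "real \<Rightarrow> real"
  defines "ubar \<equiv> \<lambda>a. L * exp (- \<mu> * a)"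
  shows "(LINT a:{t<..}|lborel. \<bar>age_sol \<mu> u b t a - ubar a\<bar>) = exp (- \<mu> * t) * L1_dist u ubar"
proof -
  have "\<bar>age_sol \<mu> u b t (s + t) - ubar (s + t)\<bar> = exp (- \<mu> * t) * \<bar>u s - ubar s\<bar>" if "0 < s" for s
  proof -
    have "age_sol \<mu> u b t (s + t) - ubar (s + t) = exp (- \<mu> * t) * (u s - ubar s)"
      using that unfolding age_sol_def ubar_def by (simp add: algebra_simps flip: exp_add)
    thus ?thesis by (simp add: abs_mult)
  qed
  hence "(LINT s:{0<..}|lborel. \<bar>age_sol \<mu> u b t (s + t) - ubar (s + t)\<bar>)
      = (LINT s:{0<..}|lborel. exp (- \<mu> * t) * \<bar>u s - ubar s\<bar>)"
    by (intro set_lebesgue_integral_cong) auto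
  thus ?thesis unfolding L1_dist_def set_integral_shift_Ioi[of t] by simp
qed

text \<open>If \<open>age_sol\<close> is not integrable, its \<open>L1_dist\<close> is the junk value \<open>0\<close> and the bound is trivial.\<close>

lemma L1_dist_age_sol_le:
  fixes \<mu> L t :: real and u b :: "real \<Rightarrow> real"
  assumes t: "0 \<le> t" and b: "continuous_on {0..} b"
  defines "ubar \<equiv> \<lambda>a. L * exp (- \<mu> * a)"
  shows "L1_dist (age_sol \<mu> u b t) ubar
    \<le> exp (- \<mu> * t) * L1_dist u ubar + (LINT a:{0<..t}|lborel. exp (- \<mu> * a) * \<bar>b (t - a) - L\<bar>)"
proof -
  define G where "G a = \<bar>age_sol \<mu> u b t a - ubar a\<bar>" for a
  define f where "f a = exp (- \<mu> * a) * \<bar>b (t - a) - L\<bar>" for a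
  have f: "set_integrable lborel {0<..t} f"
    unfolding f_def by (rule set_integrable_exp_weighted_deviation[OF b])
  show ?thesis
  proof (cases "set_integrable lborel {0<..} G")
    case False
    hence "L1_dist (age_sol \<mu> u b t) ubar = 0"
      unfolding L1_dist_def set_lebesgue_integral_def set_integrable_def G_def
      by (simp add: not_integrable_integral_eq)
    moreover have "0 \<le> (LINT a:{0<..t}|lborel. f a)" by (rule set_integral_nonneg) (simp add: f_def)
    ultimately show ?thesis using L1_dist_nonneg[of u ubar] unfolding f_def by simp
  next
    case True
    have "{0<..} = {0<..t} \<union> {t<..}" using t by auto
    hence "L1_dist (age_sol \<mu> u b t) ubar = (LINT a:{0<..t} \<union> {t<..}|lborel. G a)"
      unfolding L1_dist_def G_def by simp
    also have "\<dots> = (LINT a:{0<..t}|lborel. G a) + (LINT a:{t<..}|lborel. G a)"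
      by (rule set_integral_Un) (use True t in \<open>auto intro: set_integrable_subset\<close>)
    also have "(LINT a:{0<..t}|lborel. G a) \<le> (LINT a:{0<..t}|lborel. f a)"
    proof (rule set_integral_mono_AE[OF set_integrable_subset[OF True] f])
      show "AE a\<in>{0<..t} in lborel. G a \<le> f a"
        using AE_lborel_singleton[of t]
      proof eventually_elim
        fix a assume "a \<noteq> t"
        hence "a \<in> {0<..t} \<Longrightarrow> G a = \<bar>exp (- \<mu> * a) * (b (t - a) - L)\<bar>"
          unfolding G_def age_sol_def ubar_def by (simp add: algebra_simps)
        thus "a \<in> {0<..t} \<longrightarrow> G a \<le> f a" unfolding f_def by (simp add: abs_mult)
      qed
    qed auto
    finally show ?thesis using set_integral_age_sol_tail[where \<mu> = \<mu> and u = u and b = b and t = t and L = L] unfolding G_def f_def ubar_def by simp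
  qed
qed

locale ricker_renewal =
  fixes \<alpha> C F_max :: real and k F b :: "real \<Rightarrow> real"
  assumes alpha: "1 < \<alpha>" "\<alpha> \<le> exp 2"
    and k_meas [measurable]: "k \<in> borel_measurable borel"
    and k_nonneg: "\<And>a. 0 \<le> k a" and k_le: "\<And>a. k a \<le> C"
    and k_nonpos_eq_0: "\<And>a. a \<le> 0 \<Longrightarrow> k a = 0"
    and k_integrable: "integrable lborel k" and k_integral: "integral\<^sup>L lborel k = 1"
    and F_nonneg: "\<And>t. 0 \<le> t \<Longrightarrow> 0 \<le> F t" and F_le: "\<And>t. 0 \<le> t \<Longrightarrow> F t \<le> F_max"
    and F_tendsto: "(F \<longlongrightarrow> 0) at_top"
    and b_cont: "continuous_on {0..} b"
    and b_eq: "\<And>t. 0 \<le> t \<Longrightarrow> b t = \<alpha> * ricker (F t + (LINT a:{0..t}|lborel. k a * b (t - a)))"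
begin

definition L :: real where "L = ln \<alpha>"

definition K :: "real \<Rightarrow> real" where "K s = (LINT a:{0..s}|lborel. k a)"

definition conv_b :: "real \<Rightarrow> real" where "conv_b t = (LINT a:{0..t}|lborel. k a * b (t - a))"

definition input :: "real \<Rightarrow> real" where "input t = F t + conv_b t"

definition b_max :: real where "b_max = \<alpha> * exp (-1)"

lemma b_eq_ricker_input: "0 \<le> t \<Longrightarrow> b t = \<alpha> * ricker (input t)"
  using b_eq unfolding input_def conv_b_def by auto

lemma C_nonneg: "0 \<le> C"
  using k_nonneg[of 0] k_le[of 0] by simp

lemma L_pos: "0 < L"
  unfolding L_def using alpha by simp

lemma b_max_pos: "0 < b_max"
  unfolding b_max_def using alpha by simp

lemma b_le_b_max: "0 \<le> t \<Longrightarrow> b t \<le> b_max"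
  using b_eq_ricker_input[of t] ricker_le_exp_minus_one[of "input t"] alpha unfolding b_max_def by simp

lemma set_integrable_k: "A \<in> sets borel \<Longrightarrow> set_integrable lborel A k"
  unfolding set_integrable_def by (rule integrable_mult_indicator) (use k_integrable in auto)

lemma set_integrable_k_mult:
  assumes "0 \<le> t" "S \<in> sets borel" "S \<subseteq> {0..t}" "continuous_on {0..t} h"
  shows "set_integrable lborel S (\<lambda>a. k a * h a)"
proof -
  have "continuous_on {0..t} (\<lambda>a. \<bar>h a\<bar>)" using assms(4) by (intro continuous_intros)
  from continuous_attains_sup[OF compact_Icc _ this] assms(1) obtain M where
    M: "\<And>a. a \<in> {0..t} \<Longrightarrow> \<bar>h a\<bar> \<le> M" by (metis empty_iff)
  have "set_integrable lborel {0..t} (\<lambda>a. k a * h a)"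
  proof (rule set_integrable_bound[of lborel "{0..t}" "\<lambda>a. M * k a"])
    show "set_integrable lborel {0..t} (\<lambda>a. M * k a)" using set_integrable_k[of "{0..t}"] by auto
    have "(\<lambda>a. k a * (indicator {0..t} a *\<^sub>R h a)) \<in> borel_measurable borel"
      using borel_measurable_continuous_on_indicator[OF _ assms(4)] by measurable
    moreover have "(\<lambda>a. k a * (indicator {0..t} a *\<^sub>R h a)) = (\<lambda>a. indicator {0..t} a *\<^sub>R (k a * h a))"
      by (auto simp: indicator_def)
    ultimately show "set_borel_measurable lborel {0..t} (\<lambda>a. k a * h a)"
      unfolding set_borel_measurable_def by simp
    show "AE a in lborel. a \<in> {0..t} \<longrightarrow> norm (k a * h a) \<le> norm (M * k a)"
    proof (intro AE_I2 impI)
      fix a assume "a \<in> {0..t}"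
      hence "\<bar>h a\<bar> * k a \<le> M * k a" using M k_nonneg by (intro mult_right_mono) auto
      moreover have "0 \<le> M" using M[of 0] assms(1) abs_ge_zero[of "h 0"] by simp
      ultimately show "norm (k a * h a) \<le> norm (M * k a)" using k_nonneg[of a] by (simp add: abs_mult mult.commute)
    qed
  qed
  thus ?thesis by (rule set_integrable_subset) (use assms in auto)
qed

lemma set_integrable_k_mult_b:
  "0 \<le> t \<Longrightarrow> S \<in> sets borel \<Longrightarrow> S \<subseteq> {0..t} \<Longrightarrow> set_integrable lborel S (\<lambda>a. k a * b (t - a))"
  by (rule set_integrable_k_mult)
    (auto intro: continuous_on_compose2[OF b_cont continuous_on_diff[OF continuous_on_const continuous_on_id]])

lemma K_split: "0 \<le> s \<Longrightarrow> s \<le> s' \<Longrightarrow> K s' = K s + (LINT a:{s<..s'}|lborel. k a)"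
  unfolding K_def by (rule set_integral_Icc_split) (auto intro: set_integrable_k)

lemma K_mono: "0 \<le> s \<Longrightarrow> s \<le> s' \<Longrightarrow> K s \<le> K s'"
  using K_split[of s s'] set_integral_nonneg[of "{s<..s'}" k lborel] k_nonneg by auto

lemma K_diff_le: "0 \<le> s \<Longrightarrow> s \<le> s' \<Longrightarrow> K s' - K s \<le> C * (s' - s)"
proof -
  assume s: "0 \<le> s" "s \<le> s'"
  have "(LINT a:{s<..s'}|lborel. k a) \<le> (LINT a:{s<..s'}|lborel. C)"
    by (rule set_integral_mono) (use s set_integrable_k k_le set_integrable_const_Ioc in auto)
  thus ?thesis using K_split[OF s] s by (simp add: set_integral_const_Ioc)
qed

lemma K_0: "K 0 = 0"
proof -
  have "(\<lambda>a. indicator {0..0} a *\<^sub>R k a) = (\<lambda>_. 0 :: real)"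
    by (auto simp: indicator_def k_nonpos_eq_0 fun_eq_iff)
  thus ?thesis unfolding K_def set_lebesgue_integral_def by simp
qed

lemma K_le_C_mult: "0 \<le> s \<Longrightarrow> K s \<le> C * s"
  using K_diff_le[of 0 s] K_0 by simp

lemma set_integral_k_Ici: "(LINT a:{0..}|lborel. k a) = 1"
proof -
  have "(LINT a:{0..}|lborel. k a) = integral\<^sup>L lborel k"
    unfolding set_lebesgue_integral_def
    by (rule Bochner_Integration.integral_cong) (auto simp: indicator_def k_nonpos_eq_0)
  thus ?thesis using k_integral by simp
qed

lemma K_plus_tail: "0 \<le> s \<Longrightarrow> K s + (LINT a:{s<..}|lborel. k a) = 1"
proof -
  assume s: "0 \<le> s"
  have "{0..} = {0..s} \<union> {s<..}" using s by auto
  hence "1 = (LINT a:{0..s} \<union> {s<..}|lborel. k a)" using set_integral_k_Ici by simp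
  also have "\<dots> = K s + (LINT a:{s<..}|lborel. k a)"
    unfolding K_def by (rule set_integral_Un) (auto intro: set_integrable_k)
  finally show ?thesis by simp
qed

lemma K_le_1: "0 \<le> s \<Longrightarrow> K s \<le> 1"
  using K_plus_tail[of s] set_integral_nonneg[of "{s<..}" k lborel] k_nonneg by auto

lemma tendsto_K: "(K \<longlongrightarrow> 1) at_top"
proof -
  have "((\<lambda>s. LINT a:{0..s}|lborel. k a) \<longlongrightarrow> (LINT a:{0..}|lborel. k a)) at_top"
    by (rule tendsto_set_lebesgue_integral_at_top) (auto intro: set_integrable_k)
  thus ?thesis using set_integral_k_Ici unfolding K_def[abs_def] by simp
qed

lemma conv_segment_ge:
  assumes "0 \<le> u" "u \<le> v" "v \<le> t" "\<And>a. u < a \<Longrightarrow> a \<le> v \<Longrightarrow> lo \<le> b (t - a)"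
  shows "lo * (K v - K u) \<le> (LINT a:{u<..v}|lborel. k a * b (t - a))"
proof -
  have "(LINT a:{u<..v}|lborel. lo * k a) \<le> (LINT a:{u<..v}|lborel. k a * b (t - a))"
  proof (rule set_integral_mono)
    show "set_integrable lborel {u<..v} (\<lambda>a. lo * k a)" using set_integrable_k by auto
    show "set_integrable lborel {u<..v} (\<lambda>a. k a * b (t - a))"
      by (rule set_integrable_k_mult_b) (use assms in auto)
    show "lo * k a \<le> k a * b (t - a)" if "a \<in> {u<..v}" for a
      using mult_right_mono[OF assms(4)[of a] k_nonneg[of a]] that by (simp add: mult.commute)
  qed
  thus ?thesis using K_split[of u v] assms by simp
qed

lemma conv_b_Ioc: "0 \<le> t \<Longrightarrow> conv_b t = (LINT a:{0<..t}|lborel. k a * b (t - a))"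
proof -
  assume t: "0 \<le> t"
  have "conv_b t = (LINT a:{0..0}|lborel. k a * b (t - a)) + (LINT a:{0<..t}|lborel. k a * b (t - a))"
    unfolding conv_b_def by (rule set_integral_Icc_split) (use t set_integrable_k_mult_b in auto)
  moreover have "(\<lambda>a. indicator {0..0} a *\<^sub>R (k a * b (t - a))) = (\<lambda>a. 0 :: real)"
    by (auto simp: k_nonpos_eq_0 indicator_def fun_eq_iff)
  ultimately show ?thesis unfolding set_lebesgue_integral_def by simp
qed

lemma conv_segment_le_conv_b:
  assumes "0 \<le> u" "u \<le> v" "v \<le> t" "\<And>s. 0 \<le> s \<Longrightarrow> s \<le> t \<Longrightarrow> 0 \<le> b s"
  shows "(LINT a:{u<..v}|lborel. k a * b (t - a)) \<le> conv_b t"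
  unfolding conv_b_def
proof (rule set_integral_subset_mono)
  show "set_integrable lborel {0..t} (\<lambda>a. k a * b (t - a))"
    using set_integrable_k_mult_b assms by auto
  show "0 \<le> k a * b (t - a)" if "a \<in> {0..t}" for a using that k_nonneg assms(4) by simp
qed (use assms in auto)

lemma conv_b_le_b_max: "0 \<le> t \<Longrightarrow> conv_b t \<le> b_max"
proof -
  assume t: "0 \<le> t"
  have "conv_b t \<le> (LINT a:{0..t}|lborel. k a * b_max)"
    unfolding conv_b_def
  proof (rule set_integral_mono)
    show "k a * b (t - a) \<le> k a * b_max" if "a \<in> {0..t}" for a
      using that b_le_b_max[of "t - a"] k_nonneg[of a] by (intro mult_left_mono) auto
  qed (use t set_integrable_k_mult_b set_integrable_k in auto)
  also have "\<dots> \<le> b_max" using K_le_1[OF t] b_max_pos unfolding K_def by simp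
  finally show ?thesis .
qed

lemma conv_segment_dev_le:
  assumes "0 \<le> u" "u \<le> v" "v \<le> t" "\<And>a. u < a \<Longrightarrow> a \<le> v \<Longrightarrow> \<bar>b (t - a) - c\<bar> \<le> r"
  shows "\<bar>(LINT a:{u<..v}|lborel. k a * b (t - a)) - c * (K v - K u)\<bar> \<le> r * (K v - K u)"
proof -
  have kb: "set_integrable lborel {u<..v} (\<lambda>a. k a * b (t - a))"
    by (rule set_integrable_k_mult_b) (use assms in auto)
  have ck: "set_integrable lborel {u<..v} (\<lambda>a. c * k a)" using set_integrable_k by auto
  have "(LINT a:{u<..v}|lborel. k a * b (t - a)) - c * (K v - K u)
      = (LINT a:{u<..v}|lborel. k a * b (t - a) - c * k a)"
    using K_split[of u v] assms set_integral_diff(2)[OF kb ck] by simp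
  also have "\<bar>\<dots>\<bar> \<le> (LINT a:{u<..v}|lborel. \<bar>k a * b (t - a) - c * k a\<bar>)"
    using set_integral_norm_bound[OF set_integral_diff(1)[OF kb ck]] by simp
  also have "\<dots> \<le> (LINT a:{u<..v}|lborel. r * k a)"
  proof (rule set_integral_mono)
    show "set_integrable lborel {u<..v} (\<lambda>a. \<bar>k a * b (t - a) - c * k a\<bar>)"
      by (rule set_integrable_abs) (rule set_integral_diff(1)[OF kb ck])
    show "set_integrable lborel {u<..v} (\<lambda>a. r * k a)" using set_integrable_k by auto
    fix a assume "a \<in> {u<..v}"
    hence "k a * \<bar>b (t - a) - c\<bar> \<le> k a * r" using assms(4)[of a] k_nonneg[of a] by (intro mult_left_mono) auto
    moreover have "k a * b (t - a) - c * k a = k a * (b (t - a) - c)" by (simp add: algebra_simps)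
    ultimately show "\<bar>k a * b (t - a) - c * k a\<bar> \<le> r * k a"
      using k_nonneg[of a] by (simp add: abs_mult mult.commute)
  qed
  also have "\<dots> = r * (K v - K u)" using K_split[of u v] assms by simp
  finally show ?thesis .
qed

end

context ricker_renewal
begin

lemma b_near:
  assumes "0 \<le> t" "\<bar>b t - c\<bar> < e"
  shows "\<exists>\<eta>>0. \<forall>s\<ge>0. \<bar>s - t\<bar> < \<eta> \<longrightarrow> \<bar>b s - c\<bar> < e"
proof -
  obtain \<eta> where "0 < \<eta>" "\<And>s. s \<in> {0..} \<Longrightarrow> dist s t < \<eta> \<Longrightarrow> dist (b s) (b t) < e - \<bar>b t - c\<bar>"
    using b_cont assms unfolding continuous_on_iff by (metis atLeast_iff diff_gt_0_iff_gt)
  moreover have "\<bar>b s - c\<bar> < e" if "\<bar>b s - b t\<bar> < e - \<bar>b t - c\<bar>" for s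
    using that abs_triangle_ineq[of "b s - b t" "b t - c"] by simp
  ultimately show ?thesis by (intro exI[of _ \<eta>]) (auto simp: dist_real_def)
qed

lemma input_ge_near:
  assumes t0: "0 \<le> t0" and below: "\<And>s. 0 \<le> s \<Longrightarrow> s < t0 \<Longrightarrow> 0 \<le> b s"
    and m: "0 \<le> m" and near: "\<And>s. t0 \<le> s \<Longrightarrow> s \<le> t0 + h \<Longrightarrow> - m \<le> b s"
    and s: "t0 \<le> s" "s \<le> t0 + h"
  shows "- (C * m * h) \<le> input s"
proof -
  have s0: "0 \<le> s" using s t0 by simp
  have "conv_b s = (LINT a:{0<..s - t0}|lborel. k a * b (s - a)) + (LINT a:{s - t0<..s}|lborel. k a * b (s - a))"
    unfolding conv_b_Ioc[OF s0] by (rule set_integral_Ioc_split) (use s t0 in \<open>auto intro: set_integrable_k_mult_b\<close>)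
  moreover have "- m * (K (s - t0) - K 0) \<le> (LINT a:{0<..s - t0}|lborel. k a * b (s - a))"
    by (rule conv_segment_ge) (use s t0 near in auto)
  moreover have "0 * (K s - K (s - t0)) \<le> (LINT a:{s - t0<..s}|lborel. k a * b (s - a))"
    by (rule conv_segment_ge) (use s t0 below in auto)
  moreover have "K (s - t0) \<le> C * h"
    using K_le_C_mult[of "s - t0"] mult_left_mono[of "s - t0" h C] C_nonneg s by simp
  hence "m * K (s - t0) \<le> m * (C * h)" using m by (rule mult_left_mono)
  ultimately show ?thesis using F_nonneg[OF s0] K_0 unfolding input_def by (simp add: algebra_simps)
qed

lemma b_nonneg_near:
  assumes t0: "0 \<le> t0" and below: "\<And>s. 0 \<le> s \<Longrightarrow> s < t0 \<Longrightarrow> 0 \<le> b s"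
    and M: "\<And>s. t0 \<le> s \<Longrightarrow> s \<le> t0 + h \<Longrightarrow> \<bar>b s\<bar> \<le> M"
    and h: "0 < h" "\<alpha> * (C + 1) * exp ((C + 1) * M * h) * h \<le> 1 / 2"
    and s: "t0 \<le> s" "s \<le> t0 + h"
  shows "0 \<le> b s"
proof -
  have "continuous_on {t0..t0 + h} (\<lambda>s. max 0 (- b s))"
    using t0 by (intro continuous_intros continuous_on_subset[OF b_cont]) auto
  from continuous_attains_sup[OF compact_Icc _ this] h obtain s1 where s1: "s1 \<in> {t0..t0 + h}"
    "\<And>s. s \<in> {t0..t0 + h} \<Longrightarrow> max 0 (- b s) \<le> max 0 (- b s1)" by auto
  define m where "m = max 0 (- b s1)"
  have "m = 0"
  proof (rule ccontr)
    assume "m \<noteq> 0"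
    hence m: "0 < m" "b s1 = - m" unfolding m_def by auto
    have s1_0: "0 \<le> s1" using s1 t0 by auto
    have "m \<le> M" using M[of s1] s1 m by simp
    have "- (C * m * h) \<le> input s1"
    proof (rule input_ge_near[OF t0 below])
      show "- m \<le> b s" if "t0 \<le> s" "s \<le> t0 + h" for s
        using s1(2)[of s] that unfolding m_def by simp
    qed (use m s1 in auto)
    hence "m \<le> \<alpha> * ((C * m * h) * exp (C * m * h))"
      using ricker_neg_le[of \<alpha> "input s1"] b_eq_ricker_input[OF s1_0] m alpha C_nonneg h by simp
    also have "\<dots> \<le> \<alpha> * (((C + 1) * m * h) * exp ((C + 1) * M * h))"
    proof -
      have "C * m \<le> (C + 1) * M" using m \<open>m \<le> M\<close> C_nonneg by (intro mult_mono) auto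
      hence "exp (C * m * h) \<le> exp ((C + 1) * M * h)" using h by (simp add: mult_right_mono)
      moreover have "C * m * h \<le> (C + 1) * m * h" using m h by simp
      ultimately show ?thesis using m h alpha C_nonneg by (intro mult_left_mono mult_mono) auto
    qed
    also have "\<dots> = (\<alpha> * (C + 1) * exp ((C + 1) * M * h) * h) * m" by (simp add: mult_ac)
    also have "\<dots> \<le> (1 / 2) * m" using h(2) m by (intro mult_right_mono) auto
    finally show False using m by simp
  qed
  thus ?thesis using s1(2)[of s] s m_def by simp
qed

lemma b_nonneg_extends:
  assumes t0: "0 \<le> t0" and below: "\<And>s. 0 \<le> s \<Longrightarrow> s < t0 \<Longrightarrow> 0 \<le> b s"
  shows "\<exists>h>0. \<forall>s. t0 \<le> s \<and> s < t0 + h \<longrightarrow> 0 \<le> b s"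
proof -
  have "continuous_on {t0..t0 + 1} (\<lambda>s. \<bar>b s\<bar>)"
    using t0 by (intro continuous_intros continuous_on_subset[OF b_cont]) auto
  from continuous_attains_sup[OF compact_Icc _ this] obtain M where
    M: "\<And>s. s \<in> {t0..t0 + 1} \<Longrightarrow> \<bar>b s\<bar> \<le> M" by (metis empty_iff)
  have M0: "0 \<le> M" using M[of t0] by auto
  define P where "P = \<alpha> * (C + 1) * exp ((C + 1) * M)"
  define h where "h = min 1 (1 / (2 * P))"
  have P: "0 < P" using alpha C_nonneg by (simp add: P_def)
  have h: "0 < h" "h \<le> 1" using P by (auto simp: h_def)
  have "\<alpha> * (C + 1) * exp ((C + 1) * M * h) * h \<le> P * h"
    unfolding P_def using alpha C_nonneg M0 h by (intro mult_right_mono mult_left_mono) (auto simp: mult_left_le)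
  also have "\<dots> \<le> P * (1 / (2 * P))" using P by (intro mult_left_mono) (auto simp: h_def)
  finally have small: "\<alpha> * (C + 1) * exp ((C + 1) * M * h) * h \<le> 1 / 2" using P by simp
  have "0 \<le> b s" if "t0 \<le> s" "s < t0 + h" for s
    by (rule b_nonneg_near[OF t0 below _ h(1) small]) (use M h that in auto)
  thus ?thesis using h(1) by blast
qed

lemma b_nonneg: "0 \<le> t \<Longrightarrow> 0 \<le> b t"
  using real_continuous_induct[of 0 "\<lambda>s. 0 \<le> b s"] b_nonneg_extends by blast

end

context ricker_renewal
begin

lemma conv_b_nonneg: "0 \<le> t \<Longrightarrow> 0 \<le> conv_b t"
  unfolding conv_b_def by (rule set_integral_nonneg) (simp add: k_nonneg b_nonneg)

lemma input_nonneg: "0 \<le> t \<Longrightarrow> 0 \<le> input t"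
  unfolding input_def using F_nonneg conv_b_nonneg by simp

lemma input_le: "0 \<le> t \<Longrightarrow> input t \<le> F_max + b_max"
  unfolding input_def using F_le conv_b_le_b_max by (simp add: add_mono)

lemma b_pos_if_input_pos: "0 \<le> t \<Longrightarrow> 0 < input t \<Longrightarrow> 0 < b t"
  using b_eq_ricker_input ricker_pos alpha by simp

text \<open>\<open>F(t) - L (1 - K(t))\<close> is the deviation of the forcing from the one produced by
  the equilibrium past, and a uniform contraction margin \<open>\<theta>\<close> of the Ricker map on the annulus
  \<open>e \<le> |y - L| \<le> 2e\<close> absorbs it.\<close>

lemma b_stays_near_L:
  assumes e: "2 * e < L"
    and \<theta>: "\<And>y. e \<le> \<bar>y - L\<bar> \<Longrightarrow> \<bar>y - L\<bar> \<le> 2 * e \<Longrightarrow> \<bar>\<alpha> * ricker y - L\<bar> \<le> \<bar>y - L\<bar> - \<theta>"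
    and d: "d < \<theta>" "d \<le> e"
    and F_close: "\<And>s. 0 \<le> s \<Longrightarrow> \<bar>F s - L * (1 - K s)\<bar> \<le> d"
  shows "\<forall>t\<ge>0. \<bar>b t - L\<bar> < e"
proof (rule real_continuous_induct)
  have "0 \<le> e" using F_close[of 0] d(2) by simp
  fix t assume t: "0 \<le> t" and before: "\<And>s. 0 \<le> s \<Longrightarrow> s < t \<Longrightarrow> \<bar>b s - L\<bar> < e"
  have "\<bar>conv_b t - L * (K t - K 0)\<bar> \<le> e * (K t - K 0)"
    unfolding conv_b_Ioc[OF t] by (rule conv_segment_dev_le) (use t before in \<open>auto intro: less_imp_le\<close>)
  hence "\<bar>conv_b t - L * K t\<bar> \<le> e"
    using K_0 K_le_1[OF t] mult_left_le[of "K t" e] \<open>0 \<le> e\<close> by auto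
  moreover have "input t - L = (F t - L * (1 - K t)) + (conv_b t - L * K t)"
    unfolding input_def by (simp add: algebra_simps)
  ultimately have close: "\<bar>input t - L\<bar> \<le> d + e" using F_close[OF t] by linarith
  hence "0 < input t" using d e by linarith
  have "\<bar>b t - L\<bar> < e"
  proof (cases "\<bar>input t - L\<bar> < e")
    case True
    thus ?thesis using ricker_dist_fixpoint_le[OF alpha \<open>0 < input t\<close>] b_eq_ricker_input[OF t]
      unfolding L_def by simp
  next
    case False
    hence "\<bar>\<alpha> * ricker (input t) - L\<bar> \<le> \<bar>input t - L\<bar> - \<theta>" using \<theta> close d by simp
    thus ?thesis using b_eq_ricker_input[OF t] close d by simp
  qed
  then obtain \<eta> where "0 < \<eta>" "\<forall>s\<ge>0. \<bar>s - t\<bar> < \<eta> \<longrightarrow> \<bar>b s - L\<bar> < e" using b_near t by blast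
  thus "\<exists>\<eta>>0. \<forall>s. t \<le> s \<and> s < t + \<eta> \<longrightarrow> \<bar>b s - L\<bar> < e" using t by (intro exI[of _ \<eta>]) auto
qed

end

context ricker_renewal
begin

definition K_increases_at :: "real \<Rightarrow> bool" where
  "K_increases_at a \<longleftrightarrow> (\<forall>\<epsilon>>0. K a < K (a + \<epsilon>))"

lemma b_pos_spreads:
  assumes pq: "0 \<le> p" and pos: "\<And>s. p < s \<Longrightarrow> s < q \<Longrightarrow> 0 < b s"
    and a: "0 < a" "K_increases_at a" and t: "p + a < t" "t < q + a"
  shows "0 < b t"
proof -
  define \<epsilon> where "\<epsilon> = (t - a - p) / 2"
  have \<epsilon>: "0 < \<epsilon>" "p < t - a - \<epsilon>" using t unfolding \<epsilon>_def by (auto simp: field_simps)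
  have "continuous_on {t - a - \<epsilon>..t - a} b" by (rule continuous_on_subset[OF b_cont]) (use \<epsilon> pq in auto)
  from continuous_attains_inf[OF compact_Icc _ this] \<epsilon> obtain s0 where
    s0: "s0 \<in> {t - a - \<epsilon>..t - a}" "\<And>s. s \<in> {t - a - \<epsilon>..t - a} \<Longrightarrow> b s0 \<le> b s" by auto
  have "0 < b s0" using pos s0(1) \<epsilon> t by auto
  moreover have "0 < K (a + \<epsilon>) - K a" using a \<epsilon> unfolding K_increases_at_def by auto
  ultimately have "0 < b s0 * (K (a + \<epsilon>) - K a)" by simp
  also have "\<dots> \<le> (LINT s:{a<..a + \<epsilon>}|lborel. k s * b (t - s))"
    by (rule conv_segment_ge) (use a \<epsilon> pq s0 in auto)
  also have "\<dots> \<le> conv_b t" by (rule conv_segment_le_conv_b) (use a \<epsilon> pq b_nonneg in auto)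
  finally show ?thesis using b_pos_if_input_pos[of t] F_nonneg[of t] a pq t unfolding input_def by simp
qed

lemma b_pos_spreads_iter:
  assumes pq: "0 \<le> p" "p < q" and pos: "\<And>s. p < s \<Longrightarrow> s < q \<Longrightarrow> 0 < b s"
    and a: "0 < a" "a < a'" "a' - a < q - p" "K_increases_at a" "K_increases_at a'"
  shows "p + real n * a < t \<Longrightarrow> t < q + real n * a' \<Longrightarrow> 0 < b t"
proof (induction n arbitrary: t)
  case 0 thus ?case using pos by simp
next
  case (Suc n)
  define p' where "p' = p + real n * a"
  define q' where "q' = q + real n * a'"
  have "real n * a \<le> real n * a'" using a by (intro mult_left_mono) auto
  hence gap: "a' - a < q' - p'" and p': "0 \<le> p'" using a pq by (auto simp: p'_def q'_def)
  have pos': "\<And>s. p' < s \<Longrightarrow> s < q' \<Longrightarrow> 0 < b s" using Suc.IH by (simp add: p'_def q'_def)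
  have t: "p' + a < t" "t < q' + a'" using Suc.prems by (simp_all add: p'_def q'_def algebra_simps)
  show ?case
  proof (cases "t < q' + a")
    case True thus ?thesis using b_pos_spreads[OF p' pos' a(1,4)] t by simp
  next
    case False thus ?thesis using b_pos_spreads[OF p' pos' _ a(5)] t gap a by simp
  qed
qed

lemma continuous_on_K: "continuous_on {0..} K"
proof (rule lipschitz_on_continuous_on)
  show "C-lipschitz_on {0..} K"
  proof (rule lipschitz_onI)
    fix s s' :: real assume "s \<in> {0..}" "s' \<in> {0..}"
    thus "dist (K s) (K s') \<le> C * dist s s'"
      using K_diff_le[of s s'] K_diff_le[of s' s] K_mono[of s s'] K_mono[of s' s]
      by (cases "s \<le> s'") (auto simp: dist_real_def)
  qed (rule C_nonneg)
qed

definition quantile :: "real \<Rightarrow> real" where "quantile c = Sup {a. 0 \<le> a \<and> K a \<le> c}"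

lemma bdd_above_K_sublevel: "c < 1 \<Longrightarrow> bdd_above {a. 0 \<le> a \<and> K a \<le> c}"
proof -
  assume "c < 1"
  then obtain N where N: "\<And>s. N \<le> s \<Longrightarrow> c < K s"
    using order_tendstoD(1)[OF tendsto_K] by (auto simp: eventually_at_top_linorder)
  show ?thesis
  proof (rule bdd_aboveI[of _ N])
    fix x assume "x \<in> {a. 0 \<le> a \<and> K a \<le> c}"
    thus "x \<le> N" using N[of x] by (cases "N \<le> x") auto
  qed
qed

lemma quantile:
  assumes c: "0 < c" "c < 1"
  shows "0 < quantile c" "K (quantile c) = c" "K_increases_at (quantile c)"
proof -
  define S where "S = {a. 0 \<le> a \<and> K a \<le> c}"
  have S: "S \<noteq> {}" "bdd_above S" "0 \<in> S" using bdd_above_K_sublevel[OF c(2)] K_0 c by (auto simp: S_def)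
  have "closed ({0..} \<inter> K -` {..c})" by (intro continuous_closed_preimage continuous_on_K) auto
  moreover have "S = {0..} \<inter> K -` {..c}" by (auto simp: S_def)
  ultimately have "quantile c \<in> S" unfolding quantile_def S_def[symmetric] using S by (intro closed_contains_Sup) auto
  hence q: "0 \<le> quantile c" "K (quantile c) \<le> c" by (auto simp: S_def)
  have above: "c < K (quantile c + \<epsilon>)" if "0 < \<epsilon>" for \<epsilon>
  proof (rule ccontr)
    assume "\<not> c < K (quantile c + \<epsilon>)"
    hence "quantile c + \<epsilon> \<in> S" using q that by (auto simp: S_def)
    thus False using cSup_upper[OF _ S(2)] that unfolding quantile_def S_def[symmetric] by fastforce
  qed
  show Kq: "K (quantile c) = c"
  proof (rule ccontr)
    assume "K (quantile c) \<noteq> c"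
    hence "0 < (c - K (quantile c)) / (C + 1)" using q C_nonneg by simp
    moreover have "K (quantile c + \<epsilon>) \<le> K (quantile c) + C * \<epsilon>" if "0 < \<epsilon>" for \<epsilon>
      using K_diff_le[of "quantile c" "quantile c + \<epsilon>"] q that by simp
    ultimately have "c < K (quantile c) + C * ((c - K (quantile c)) / (C + 1))"
      using above by (meson less_le_trans)
    moreover have "C * ((c - K (quantile c)) / (C + 1)) \<le> c - K (quantile c)"
      using q C_nonneg by (simp add: field_simps)
    ultimately show False by simp
  qed
  show "0 < quantile c" using q Kq K_0 c by (cases "quantile c = 0") auto
  show "K_increases_at (quantile c)" unfolding K_increases_at_def using above Kq by simp
qed

lemma quantile_strict_mono: "0 < c \<Longrightarrow> c < c' \<Longrightarrow> c' < 1 \<Longrightarrow> quantile c < quantile c'"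
  using cSup_subset_mono[OF _ bdd_above_K_sublevel[of c']] quantile(2)[of c] quantile(2)[of c'] K_0
  unfolding quantile_def by (smt (verit) Collect_mono_iff empty_Collect_eq order.refl)

text \<open>Two increase points of \<open>K\<close> closer than any prescribed \<open>D\<close>: otherwise the quantiles of the levels
  \<open>(j + 1) / (2 (N + 1))\<close>, \<open>j \<le> N\<close>, would be \<open>D\<close>-separated, pushing the median beyond \<open>N D\<close>.\<close>

lemma K_increases_at_close_pair:
  assumes D: "0 < D"
  shows "\<exists>a a'. 0 < a \<and> a < a' \<and> a' - a < D \<and> K_increases_at a \<and> K_increases_at a'"
proof (rule ccontr)
  assume far: "\<not> ?thesis"
  obtain N :: nat where N: "quantile (1 / 2) < real N * D" using reals_Archimedean3[OF D] by blast
  define c where "c j = (real j + 1) / (2 * (real N + 1))" for j :: nat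
  have c: "0 < c j" "j \<le> N \<Longrightarrow> c j < 1" for j unfolding c_def by (auto simp: field_simps)
  have "j \<le> N \<Longrightarrow> real j * D \<le> quantile (c j)" for j
  proof (induction j)
    case 0 thus ?case using quantile(1)[of "c 0"] c by simp
  next
    case (Suc j)
    have "c j < c (Suc j)" unfolding c_def by (simp add: divide_strict_right_mono)
    hence "quantile (c j) < quantile (c (Suc j))"
      using quantile_strict_mono c Suc.prems by simp
    hence "D \<le> quantile (c (Suc j)) - quantile (c j)"
      using far quantile(1,3)[of "c j"] quantile(3)[of "c (Suc j)"] c Suc.prems by force
    thus ?case using Suc by (simp add: algebra_simps)
  qed
  moreover have "c N = 1 / 2" unfolding c_def by (simp add: field_simps)
  ultimately have "real N * D \<le> quantile (1 / 2)" by (metis order.refl)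
  thus False using N by simp
qed

end

context ricker_renewal
begin

lemma b_pos_on_long_window:
  assumes t1: "0 < t1" "0 < F t1"
  shows "\<exists>T0\<ge>0. \<forall>s. T0 \<le> s \<and> s \<le> T0 + A \<longrightarrow> 0 < b s"
proof -
  have "0 < input t1" using t1 conv_b_nonneg[of t1] by (simp add: input_def add_pos_nonneg)
  hence "0 < b t1" using b_pos_if_input_pos t1 by simp
  then obtain r where r: "0 < r" "\<forall>s\<ge>0. \<bar>s - t1\<bar> < r \<longrightarrow> \<bar>b s - b t1\<bar> < b t1"
    using b_near[of t1 "b t1" "b t1"] t1 by auto
  define p where "p = t1 - min r t1"
  define q where "q = t1 + min r t1"
  have pq: "0 \<le> p" "p < q" using r t1 by (auto simp: p_def q_def)
  have pos: "0 < b s" if "p < s" "s < q" for s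
  proof -
    have "0 \<le> s" "\<bar>s - t1\<bar> < r" using that by (auto simp: p_def q_def)
    thus ?thesis using r(2) by (auto simp: abs_less_iff)
  qed
  obtain a a' where aa: "0 < a" "a < a'" "a' - a < q - p" "K_increases_at a" "K_increases_at a'"
    using K_increases_at_close_pair[of "q - p"] pq by auto
  obtain n :: nat where n: "A + 2 < real n * (a' - a)" using reals_Archimedean3[of "a' - a"] aa by auto
  define T0 where "T0 = p + real n * a + 1"
  have "0 < b s" if "T0 \<le> s" "s \<le> T0 + A" for s
  proof (rule b_pos_spreads_iter[OF pq pos aa])
    show "p + real n * a < s" using that by (simp add: T0_def)
    show "s < q + real n * a'" using that n pq by (simp add: T0_def algebra_simps)
  qed
  moreover have "0 \<le> T0" using pq aa by (simp add: T0_def)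
  ultimately show ?thesis by blast
qed

text \<open>Below \<open>ln \<alpha> / 2\<close> the Ricker map expands by at least \<open>\<surd>\<alpha>\<close>, and a convolution of a past where
  \<open>b \<ge> m\<close> yields \<open>input \<ge> m / \<surd>\<alpha>\<close> as soon as \<open>K\<close> has accumulated mass \<open>\<kappa> > 1 / \<surd>\<alpha>\<close>; so a lower
  bound that holds on a window of length \<open>A\<close> propagates forward.\<close>

lemma b_lower_bound_persists:
  assumes T0: "0 \<le> T0" and m: "0 < m" "m \<le> c0"
    and ricker_ge: "\<And>y. 0 \<le> y \<Longrightarrow> y \<le> F_max + b_max \<Longrightarrow> min (sqrt \<alpha> * y) c0 \<le> \<alpha> * ricker y"
    and A: "0 \<le> A" "\<kappa> \<le> K A" and \<eta>: "0 < \<eta>" "1 \<le> sqrt \<alpha> * (\<kappa> - C * \<eta>)"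
    and window: "\<And>s. T0 \<le> s \<Longrightarrow> s \<le> T0 + A \<Longrightarrow> m \<le> b s"
  shows "\<forall>t\<ge>T0. m \<le> b t"
proof (rule real_continuous_induct)
  fix t assume t: "T0 \<le> t" and past: "\<And>r. T0 \<le> r \<Longrightarrow> r < t \<Longrightarrow> m \<le> b r"
  show "\<exists>\<eta>>0. \<forall>s. t \<le> s \<and> s < t + \<eta> \<longrightarrow> m \<le> b s"
  proof (cases "t < T0 + A")
    case True
    thus ?thesis using window t by (intro exI[of _ "T0 + A - t"]) auto
  next
    case False
    have "m \<le> b s" if s: "t \<le> s" "s < t + \<eta>" for s
    proof -
      have s0: "0 \<le> s" using s t T0 by simp
      have "m * (K (s - T0) - K (s - t)) \<le> (LINT a:{s - t<..s - T0}|lborel. k a * b (s - a))"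
        by (rule conv_segment_ge) (use s t past T0 in auto)
      also have "\<dots> \<le> conv_b s" by (rule conv_segment_le_conv_b) (use s t T0 b_nonneg in auto)
      finally have "m * (K (s - T0) - K (s - t)) \<le> input s" using F_nonneg[OF s0] by (simp add: input_def)
      moreover have "\<kappa> \<le> K (s - T0)" using A K_mono[of A "s - T0"] s False by simp
      moreover have "K (s - t) \<le> C * \<eta>"
        using K_le_C_mult[of "s - t"] mult_left_mono[of "s - t" \<eta> C] C_nonneg s by simp
      ultimately have "m * (\<kappa> - C * \<eta>) \<le> input s" using m by (smt (verit) mult_left_mono)
      hence "sqrt \<alpha> * (m * (\<kappa> - C * \<eta>)) \<le> sqrt \<alpha> * input s"
        using alpha by (intro mult_left_mono) auto
      moreover have "m * 1 \<le> m * (sqrt \<alpha> * (\<kappa> - C * \<eta>))" using \<eta>(2) m by (intro mult_left_mono) auto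
      ultimately have "m \<le> min (sqrt \<alpha> * input s) c0" using m(2) by (simp add: mult_ac)
      also have "\<dots> \<le> \<alpha> * ricker (input s)" using ricker_ge input_nonneg input_le s0 by simp
      finally show ?thesis using b_eq_ricker_input[OF s0] by simp
    qed
    thus ?thesis using \<eta>(1) by blast
  qed
qed

lemma b_eventually_bounded_below:
  assumes t1: "0 < t1" "0 < F t1"
  shows "\<exists>m>0. \<exists>T\<ge>0. \<forall>t\<ge>T. m \<le> b t"
proof -
  obtain c0 where c0: "0 < c0"
    "\<And>y. 0 \<le> y \<Longrightarrow> y \<le> F_max + b_max \<Longrightarrow> min (sqrt \<alpha> * y) c0 \<le> \<alpha> * ricker y"
    using ricker_ge_min_sqrt_mult[OF alpha(1)] by blast
  have sqrt: "1 / sqrt \<alpha> < 1" using alpha by simp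
  define \<kappa> where "\<kappa> = (1 + 1 / sqrt \<alpha>) / 2"
  have \<kappa>: "1 / sqrt \<alpha> < \<kappa>" "\<kappa> < 1" using sqrt unfolding \<kappa>_def by auto
  obtain A where "\<And>s. A \<le> s \<Longrightarrow> \<kappa> < K s"
    using order_tendstoD(1)[OF tendsto_K \<kappa>(2)] by (auto simp: eventually_at_top_linorder)
  hence A: "0 \<le> max A 0" "\<kappa> \<le> K (max A 0)" by (auto intro: less_imp_le)
  define \<eta> where "\<eta> = (\<kappa> - 1 / sqrt \<alpha>) / (C + 1)"
  have \<eta>: "0 < \<eta>" using \<kappa> C_nonneg by (simp add: \<eta>_def)
  have "C * \<eta> \<le> (C + 1) * \<eta>" using \<eta> by simp
  also have "\<dots> = \<kappa> - 1 / sqrt \<alpha>" using C_nonneg by (simp add: \<eta>_def)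
  finally have "C * \<eta> \<le> \<kappa> - 1 / sqrt \<alpha>" .
  hence "sqrt \<alpha> * (1 / sqrt \<alpha>) \<le> sqrt \<alpha> * (\<kappa> - C * \<eta>)" using alpha by (intro mult_left_mono) auto
  hence \<eta>_small: "1 \<le> sqrt \<alpha> * (\<kappa> - C * \<eta>)" using alpha by simp
  obtain T0 where T0: "0 \<le> T0" "\<And>s. T0 \<le> s \<Longrightarrow> s \<le> T0 + max A 0 \<Longrightarrow> 0 < b s"
    using b_pos_on_long_window[OF t1] by blast
  have "continuous_on {T0..T0 + max A 0} b" by (rule continuous_on_subset[OF b_cont]) (use T0 in auto)
  from continuous_attains_inf[OF compact_Icc _ this] obtain s0 where
    s0: "s0 \<in> {T0..T0 + max A 0}" "\<And>s. s \<in> {T0..T0 + max A 0} \<Longrightarrow> b s0 \<le> b s" by auto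
  define m where "m = min (b s0) c0"
  have m: "0 < m" "m \<le> c0" using T0 s0 c0 by (auto simp: m_def)
  have window: "m \<le> b s" if "T0 \<le> s" "s \<le> T0 + max A 0" for s
    using s0(2)[of s] that by (simp add: m_def min.coboundedI1)
  have "\<forall>t\<ge>T0. m \<le> b t" using b_lower_bound_persists[OF T0(1) m c0(2) A \<eta> \<eta>_small window] by blast
  thus ?thesis using m T0 by blast
qed

end

context ricker_renewal
begin

text \<open>Split the convolution at \<open>t - T\<close>: the recent past, where \<open>b\<close> is \<open>r\<close>-close to \<open>L\<close> and at least
  \<open>m\<close>, carries the mass \<open>K (t - T)\<close>; the remote past is only known to lie in \<open>[0, b_max]\<close>.\<close>

lemma input_split_bounds:
  assumes T: "0 \<le> T" "T \<le> t"
    and r: "\<And>s. T \<le> s \<Longrightarrow> \<bar>b s - L\<bar> \<le> r" and m: "\<And>s. T \<le> s \<Longrightarrow> m \<le> b s"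
  shows "\<bar>input t - L\<bar> \<le> \<bar>F t\<bar> + L * (1 - K t) + r * K (t - T) + (b_max + L) * (K t - K (t - T))"
    and "m * K (t - T) \<le> input t"
proof -
  define v where "v = t - T"
  have v: "0 \<le> v" "v \<le> t" "0 \<le> t" using T by (auto simp: v_def)
  define I1 where "I1 = (LINT a:{0<..v}|lborel. k a * b (t - a))"
  define I2 where "I2 = (LINT a:{v<..t}|lborel. k a * b (t - a))"
  have split: "conv_b t = I1 + I2" unfolding conv_b_Ioc[OF v(3)] I1_def I2_def
    by (rule set_integral_Ioc_split) (use v in \<open>auto intro: set_integrable_k_mult_b\<close>)
  have I1_dev: "\<bar>I1 - L * (K v - K 0)\<bar> \<le> r * (K v - K 0)" unfolding I1_def
    by (rule conv_segment_dev_le) (use v r in \<open>auto simp: v_def\<close>)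
  have "\<bar>b (t - a) - L\<bar> \<le> b_max + L" if "a \<le> t" for a
    using b_nonneg[of "t - a"] b_le_b_max[of "t - a"] L_pos that by (simp add: abs_le_iff)
  hence I2_dev: "\<bar>I2 - L * (K t - K v)\<bar> \<le> (b_max + L) * (K t - K v)" unfolding I2_def
    by (intro conv_segment_dev_le) (use v in auto)
  have "input t - L = F t - L * (1 - K t) + (I1 - L * (K v - K 0)) + (I2 - L * (K t - K v))"
    unfolding input_def split using K_0 by (simp add: algebra_simps)
  moreover have "0 \<le> L * (1 - K t)" using L_pos K_le_1[OF v(3)] by simp
  ultimately show "\<bar>input t - L\<bar> \<le> \<bar>F t\<bar> + L * (1 - K t) + r * K (t - T) + (b_max + L) * (K t - K (t - T))"
    using I1_dev I2_dev K_0 unfolding v_def by (smt (verit))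
  have "m * (K v - K 0) \<le> I1" unfolding I1_def
    by (rule conv_segment_ge) (use v m in \<open>auto simp: v_def\<close>)
  moreover have "0 * (K t - K v) \<le> I2" unfolding I2_def
    by (rule conv_segment_ge) (use v b_nonneg in auto)
  ultimately show "m * K (t - T) \<le> input t"
    using K_0 F_nonneg[OF v(3)] by (simp add: input_def split v_def)
qed

lemma input_eventually_near:
  assumes m: "0 < m" "0 \<le> T1" "\<And>t. T1 \<le> t \<Longrightarrow> m \<le> b t"
    and r: "\<And>t. T2 \<le> t \<Longrightarrow> \<bar>b t - L\<bar> \<le> r" and \<xi>: "0 < \<xi>"
  shows "\<exists>T. \<forall>t\<ge>T. \<bar>input t - L\<bar> \<le> r + \<xi> \<and> m / 2 \<le> input t"
proof -
  define T where "T = max T1 T2"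
  have T: "0 \<le> T" "T1 \<le> T" "T2 \<le> T" using m by (auto simp: T_def)
  have r0: "0 \<le> r" using r[OF T(3)] by (meson abs_ge_zero order_trans)
  have r': "\<And>s. T \<le> s \<Longrightarrow> \<bar>b s - L\<bar> \<le> r" and m': "\<And>s. T \<le> s \<Longrightarrow> m \<le> b s"
    using r m(3) T by auto
  define BL where "BL = b_max + 2 * L"
  define \<epsilon> where "\<epsilon> = min (1 / 2) (\<xi> / (2 * BL))"
  have BL: "0 < BL" using b_max_pos L_pos by (simp add: BL_def)
  have \<epsilon>: "0 < \<epsilon>" "\<epsilon> \<le> 1 / 2" using \<xi> BL by (auto simp: \<epsilon>_def)
  have "BL * \<epsilon> \<le> BL * (\<xi> / (2 * BL))" using BL by (intro mult_left_mono) (auto simp: \<epsilon>_def)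
  hence \<epsilon>_small: "BL * \<epsilon> \<le> \<xi> / 2" using BL by simp
  obtain NK where NK: "\<And>s. NK \<le> s \<Longrightarrow> 1 - \<epsilon> < K s"
    using order_tendstoD(1)[OF tendsto_K, of "1 - \<epsilon>"] \<epsilon> by (auto simp: eventually_at_top_linorder)
  have "\<forall>\<^sub>F t in at_top. dist (F t) 0 < \<xi> / 2" using F_tendsto \<xi> unfolding tendsto_iff by (meson half_gt_zero)
  then obtain NF where NF: "\<And>t. NF \<le> t \<Longrightarrow> \<bar>F t\<bar> < \<xi> / 2"
    by (auto simp: eventually_at_top_linorder)
  have "\<bar>input t - L\<bar> \<le> r + \<xi> \<and> m / 2 \<le> input t" if t: "max NF (T + max NK 0) \<le> t" for t
  proof -
    have Tt: "T \<le> t" using t by linarith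
    have K: "1 - \<epsilon> < K (t - T)" "K (t - T) \<le> K t" "K t \<le> 1"
      using NK[of "t - T"] K_mono[of "t - T" t] K_le_1[of t] t T by auto
    note bounds = input_split_bounds[OF T(1) Tt r' m']
    have "m * (1 / 2) \<le> m * K (t - T)" using m K \<epsilon> by (intro mult_left_mono) auto
    hence "m / 2 \<le> input t" using bounds(2) by linarith
    have "\<bar>input t - L\<bar> \<le> \<bar>F t\<bar> + L * (1 - K t) + r * K (t - T) + (b_max + L) * (K t - K (t - T))"
      by (rule bounds(1))
    also have "\<dots> \<le> \<xi> / 2 + L * \<epsilon> + r + (b_max + L) * \<epsilon>"
    proof -
      have "L * (1 - K t) \<le> L * \<epsilon>" using L_pos K by (intro mult_left_mono) auto
      moreover have "r * K (t - T) \<le> r" using r0 K by (simp add: mult_left_le)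
      moreover have "(b_max + L) * (K t - K (t - T)) \<le> (b_max + L) * \<epsilon>"
        using b_max_pos L_pos K by (intro mult_left_mono) auto
      ultimately show ?thesis using NF[of t] t by simp
    qed
    also have "\<dots> \<le> r + \<xi>" using \<epsilon>_small by (simp add: BL_def algebra_simps)
    finally show ?thesis using \<open>m / 2 \<le> input t\<close> by simp
  qed
  thus ?thesis by blast
qed

end

context ricker_renewal
begin

lemma eventual_deviation_improves:
  assumes m: "0 < m" "0 \<le> T1" "\<And>t. T1 \<le> t \<Longrightarrow> m \<le> b t" and R: "0 < R"
  shows "\<exists>\<xi>>0. \<exists>R'<R. 0 \<le> R' \<and> (\<forall>r T. r < R + \<xi> \<longrightarrow> (\<forall>t\<ge>T. \<bar>b t - L\<bar> \<le> r) \<longrightarrow>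
           (\<exists>T'. \<forall>t\<ge>T'. \<bar>b t - L\<bar> \<le> R'))"
proof -
  define S where "S = {m / 2..L + R + 1} \<inter> {y. R / 2 \<le> \<bar>y - L\<bar>}"
  have "closed {y. R / 2 \<le> \<bar>y - L\<bar>}" by (intro closed_Collect_le continuous_intros)
  hence "compact S" unfolding S_def by (intro compact_Int_closed) auto
  moreover have "\<And>y. y \<in> S \<Longrightarrow> 0 < y \<and> y \<noteq> ln \<alpha>" using m R unfolding S_def L_def by auto
  ultimately obtain \<theta> where \<theta>: "0 < \<theta>" "\<And>y. y \<in> S \<Longrightarrow> \<bar>\<alpha> * ricker y - L\<bar> \<le> \<bar>y - L\<bar> - \<theta>"
    using ricker_dist_fixpoint_uniform[OF alpha] unfolding L_def by meson
  define \<xi> where "\<xi> = min (\<theta> / 4) (1 / 2)"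
  have \<xi>: "0 < \<xi>" "\<xi> \<le> \<theta> / 4" "\<xi> \<le> 1 / 2" using \<theta> by (auto simp: \<xi>_def)
  define R' where "R' = max (R / 2) (R - \<theta> / 2)"
  have "\<exists>T'. \<forall>t\<ge>T'. \<bar>b t - L\<bar> \<le> R'" if r: "r < R + \<xi>" "\<forall>t\<ge>T. \<bar>b t - L\<bar> \<le> r" for r T
  proof -
    obtain T' where T': "\<And>t. T' \<le> t \<Longrightarrow> \<bar>input t - L\<bar> \<le> r + \<xi> \<and> m / 2 \<le> input t"
      using input_eventually_near[OF m _ \<xi>(1), of T r] r by blast
    have "\<bar>b t - L\<bar> \<le> R'" if t: "max T' 0 \<le> t" for t
    proof -
      have t0: "0 \<le> t" and near: "\<bar>input t - L\<bar> \<le> r + \<xi>" "m / 2 \<le> input t" using T' t by auto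
      show ?thesis
      proof (cases "\<bar>input t - L\<bar> < R / 2")
        case True
        hence "\<bar>b t - L\<bar> < R / 2" using ricker_dist_fixpoint_le[OF alpha, of "input t"] near m
          b_eq_ricker_input[OF t0] unfolding L_def by simp
        thus ?thesis by (simp add: R'_def le_max_iff_disj)
      next
        case False
        moreover have "input t \<le> L + R + 1" using abs_le_D1[OF near(1)] r(1) \<xi>(3) by linarith
        ultimately have "input t \<in> S" using near(2) unfolding S_def by simp
        hence "\<bar>b t - L\<bar> \<le> \<bar>input t - L\<bar> - \<theta>" using \<theta>(2) b_eq_ricker_input[OF t0] by simp
        also have "\<dots> \<le> R - \<theta> / 2" using near(1) r(1) \<xi>(2) by linarith
        finally show ?thesis by (simp add: R'_def le_max_iff_disj)
      qed
    qed
    thus ?thesis by blast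
  qed
  moreover have "R' < R" "0 \<le> R'" using R \<theta> by (auto simp: R'_def)
  ultimately show ?thesis using \<xi>(1) by blast
qed

text \<open>The least eventual bound \<open>R\<close> of \<open>|b - L|\<close> is \<open>0\<close>, since any positive \<open>R\<close> could be
  lowered by the previous lemma.\<close>

lemma b_tendsto_L:
  assumes "0 < t1" "0 < F t1"
  shows "(b \<longlongrightarrow> L) at_top"
proof -
  obtain m T1 where m: "0 < m" "0 \<le> T1" "\<And>t. T1 \<le> t \<Longrightarrow> m \<le> b t"
    using b_eventually_bounded_below[OF assms] by blast
  define Rs where "Rs = {r. 0 \<le> r \<and> (\<exists>T. \<forall>t\<ge>T. \<bar>b t - L\<bar> \<le> r)}"
  have "\<bar>b t - L\<bar> \<le> b_max + L" if "0 \<le> t" for t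
    using b_nonneg[OF that] b_le_b_max[OF that] L_pos by (simp add: abs_le_iff)
  hence "b_max + L \<in> Rs" using b_max_pos L_pos unfolding Rs_def by (auto intro!: exI[of _ 0])
  moreover have Rs_nonneg: "\<And>r. r \<in> Rs \<Longrightarrow> 0 \<le> r" unfolding Rs_def by blast
  ultimately have Rs: "Rs \<noteq> {}" "bdd_below Rs" by (auto intro: bdd_belowI[of _ 0])
  have "Inf Rs = 0"
  proof (rule ccontr)
    assume "Inf Rs \<noteq> 0"
    moreover have "0 \<le> Inf Rs" using Rs(1) Rs_nonneg by (rule cInf_greatest)
    ultimately have R: "0 < Inf Rs" by simp
    obtain \<xi> R' where \<xi>: "0 < \<xi>" "R' < Inf Rs" "0 \<le> R'"
      and improve: "\<And>r T. r < Inf Rs + \<xi> \<Longrightarrow> \<forall>t\<ge>T. \<bar>b t - L\<bar> \<le> r \<Longrightarrow> \<exists>T'. \<forall>t\<ge>T'. \<bar>b t - L\<bar> \<le> R'"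
      using eventual_deviation_improves[OF m R] by blast
    obtain r where r: "r \<in> Rs" "r < Inf Rs + \<xi>"
      using cInf_less_iff[OF Rs(1,2), of "Inf Rs + \<xi>"] \<xi>(1) by auto
    then obtain T where "\<forall>t\<ge>T. \<bar>b t - L\<bar> \<le> r" unfolding Rs_def by blast
    then obtain T' where "\<forall>t\<ge>T'. \<bar>b t - L\<bar> \<le> R'" using improve r(2) by blast
    hence "R' \<in> Rs" using \<xi>(3) unfolding Rs_def by blast
    hence "Inf Rs \<le> R'" using Rs(2) by (rule cInf_lower)
    thus False using \<xi>(2) by simp
  qed
  show ?thesis
  proof (rule tendstoI)
    fix e :: real assume "0 < e"
    then obtain r where "r \<in> Rs" "r < e" using cInf_less_iff[OF Rs(1,2), of e] \<open>Inf Rs = 0\<close> by auto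
    then obtain T where "\<forall>t\<ge>T. \<bar>b t - L\<bar> \<le> r" unfolding Rs_def by blast
    thus "\<forall>\<^sub>F t in at_top. dist (b t) L < e"
      using \<open>r < e\<close> by (auto simp: eventually_at_top_linorder dist_real_def intro!: exI[of _ T])
  qed
qed

end

locale birth_kernel =
  fixes \<mu> \<alpha> C0 :: real and \<beta> :: "real \<Rightarrow> real"
  assumes mu: "0 < \<mu>" and alpha: "1 < \<alpha>" "\<alpha> \<le> exp 2"
    and beta_meas: "\<beta> \<in> borel_measurable lborel"
    and beta_bounded: "AE a in lborel. 0 < a \<longrightarrow> 0 \<le> \<beta> a \<and> \<beta> a \<le> C0"
    and beta_normalized: "(LINT a:{0<..}|lborel. \<beta> a * exp (- \<mu> * a)) = 1"
begin

text \<open>\<open>\<beta>\<close> is bounded only almost everywhere on \<open>(0, \<infinity>)\<close>; \<open>beta_rep\<close> is a version of it that is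
  bounded everywhere and vanishes on \<open>(-\<infinity>, 0]\<close>, as required of the kernel of \<open>ricker_renewal\<close>.\<close>

definition beta_rep :: "real \<Rightarrow> real" where
  "beta_rep a = (if 0 < a \<and> 0 \<le> \<beta> a \<and> \<beta> a \<le> C0 then \<beta> a else 0)"

definition kernel :: "real \<Rightarrow> real" where "kernel a = beta_rep a * exp (- \<mu> * a)"

definition beta_bound :: real where "beta_bound = max C0 0"

definition ubar :: "real \<Rightarrow> real" where "ubar a = ln \<alpha> * exp (- \<mu> * a)"

lemma beta_borel [measurable]: "\<beta> \<in> borel_measurable borel"
  using beta_meas by simp

lemma beta_rep_borel [measurable]: "beta_rep \<in> borel_measurable borel"
  unfolding beta_rep_def[abs_def] by measurable

lemma kernel_borel [measurable]: "kernel \<in> borel_measurable borel"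
  unfolding kernel_def[abs_def] by measurable

lemma ubar_borel [measurable]: "ubar \<in> borel_measurable borel"
  unfolding ubar_def[abs_def] by measurable

lemma beta_rep_nonneg: "0 \<le> beta_rep a"
  unfolding beta_rep_def by auto

lemma beta_rep_le: "beta_rep a \<le> beta_bound"
  unfolding beta_rep_def beta_bound_def by auto

lemma beta_bound_nonneg: "0 \<le> beta_bound"
  unfolding beta_bound_def by auto

lemma kernel_nonneg: "0 \<le> kernel a"
  unfolding kernel_def using beta_rep_nonneg by simp

lemma kernel_nonpos_eq_0: "a \<le> 0 \<Longrightarrow> kernel a = 0"
  unfolding kernel_def beta_rep_def by simp

lemma kernel_le_beta_rep: "kernel a \<le> beta_rep a"
proof (cases "0 < a")
  case True
  hence "exp (- \<mu> * a) \<le> 1" using mu by simp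
  thus ?thesis unfolding kernel_def using beta_rep_nonneg[of a] by (simp add: mult_left_le)
qed (simp add: kernel_nonpos_eq_0 beta_rep_nonneg)

lemma kernel_le: "kernel a \<le> beta_bound"
  using kernel_le_beta_rep beta_rep_le order_trans by blast

lemma AE_beta_rep_eq: "AE a in lborel. 0 < a \<longrightarrow> beta_rep a = \<beta> a"
  using beta_bounded by eventually_elim (auto simp: beta_rep_def)

lemma AE_beta_rep_shift_eq: "AE s in lborel. 0 < s \<longrightarrow> beta_rep (s + t) = \<beta> (s + t)" if "0 \<le> t"
proof -
  have "AE x in lborel. (\<lambda>a. 0 < a \<longrightarrow> beta_rep a = \<beta> a) (t + 1 * x)"
    by (rule AE_borel_affine[OF _ _ AE_beta_rep_eq]) auto
  thus ?thesis by eventually_elim (use that in \<open>auto simp: add.commute\<close>)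
qed

lemma AE_kernel_eq: "AE a in lborel. indicator {0<..} a *\<^sub>R (\<beta> a * exp (- \<mu> * a)) = kernel a"
  using AE_beta_rep_eq by eventually_elim (auto simp: kernel_def indicator_def beta_rep_def)

lemma kernel_integrable: "integrable lborel kernel"
proof -
  have "set_integrable lborel {0<..} (\<lambda>a. \<beta> a * exp (- \<mu> * a))"
    using beta_normalized by (metis not_integrable_integral_eq set_integrable_def
        set_lebesgue_integral_def zero_neq_one)
  thus ?thesis unfolding set_integrable_def by (rule integrable_cong_AE_imp[OF _ _ AE_kernel_eq]) auto
qed

lemma kernel_integral: "integral\<^sup>L lborel kernel = 1"
  using integral_cong_AE[OF _ _ AE_kernel_eq] beta_normalized
  unfolding set_lebesgue_integral_def by simp

lemma set_integrable_kernel: "A \<in> sets borel \<Longrightarrow> set_integrable lborel A kernel"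
  unfolding set_integrable_def by (rule integrable_mult_indicator) (use kernel_integrable in auto)

lemma set_integrable_ubar: "set_integrable lborel {0<..} ubar"
  using set_integrable_exp_neg[OF mu, of "{0<..}"] unfolding ubar_def[abs_def] by (auto simp: subset_eq)

end

locale age_solution = birth_kernel +
  fixes u0 b :: "real \<Rightarrow> real"
  assumes u0: "u0 \<in> M0_hat \<mu> \<beta>" and b_sol: "renewal_sol \<mu> \<alpha> \<beta> u0 b"
begin

definition u0_rep :: "real \<Rightarrow> real" where "u0_rep s = max 0 (indicator {0<..} s * u0 s)"

text \<open>The births due to the initial population: \<open>F(t) = \<integral>\<^sub>t\<^sup>\<infinity> \<beta>(a) e\<^sup>-\<^sup>\<mu>\<^sup>t u\<^sub>0(a - t) da\<close>.\<close>

definition forcing :: "real \<Rightarrow> real" where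
  "forcing t = exp (- \<mu> * t) * (LINT s:{0<..}|lborel. beta_rep (s + t) * u0_rep s)"

definition forcing_max :: real where "forcing_max = beta_bound * (LINT s:{0<..}|lborel. u0_rep s)"

lemma set_integrable_u0: "set_integrable lborel {0<..} u0"
  using u0 unfolding M0_hat_def L1_plus_def by auto

lemma AE_u0_rep_eq: "AE s in lborel. 0 < s \<longrightarrow> u0_rep s = u0 s"
  using u0 unfolding M0_hat_def L1_plus_def by (auto elim!: eventually_mono simp: u0_rep_def)

lemma u0_indicator_borel [measurable]: "(\<lambda>s. indicator {0<..} s * u0 s) \<in> borel_measurable borel"
  using borel_measurable_integrable[OF set_integrable_u0[unfolded set_integrable_def]] by simp

lemma u0_rep_borel [measurable]: "u0_rep \<in> borel_measurable borel"
  unfolding u0_rep_def[abs_def] by measurable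

lemma u0_rep_nonneg: "0 \<le> u0_rep s"
  unfolding u0_rep_def by simp

lemma u0_rep_integrable: "integrable lborel u0_rep"
proof -
  have "AE s in lborel. indicator {0<..} s *\<^sub>R u0 s = u0_rep s"
    using AE_u0_rep_eq by eventually_elim (auto simp: indicator_def u0_rep_def)
  thus ?thesis using set_integrable_u0 unfolding set_integrable_def by (subst (asm) integrable_cong_AE) auto
qed

lemma set_integrable_u0_rep: "A \<in> sets borel \<Longrightarrow> set_integrable lborel A u0_rep"
  unfolding set_integrable_def by (rule integrable_mult_indicator) (use u0_rep_integrable in auto)

lemma set_integrable_beta_rep_shift_mult:
  assumes "set_integrable lborel {0<..} f" "\<And>s. 0 \<le> f s" and [measurable]: "f \<in> borel_measurable borel"
  shows "set_integrable lborel {0<..} (\<lambda>s. beta_rep (s + t) * f s)"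
proof (rule set_integrable_bound[of lborel "{0<..}" "\<lambda>s. beta_bound * f s"])
  show "set_integrable lborel {0<..} (\<lambda>s. beta_bound * f s)" using assms(1) by auto
  show "set_borel_measurable lborel {0<..} (\<lambda>s. beta_rep (s + t) * f s)"
    unfolding set_borel_measurable_def by measurable
  show "AE s in lborel. s \<in> {0<..} \<longrightarrow> norm (beta_rep (s + t) * f s) \<le> norm (beta_bound * f s)"
  proof (intro AE_I2 impI)
    fix s
    have "beta_rep (s + t) * f s \<le> beta_bound * f s" using beta_rep_le assms(2) by (rule mult_right_mono)
    thus "norm (beta_rep (s + t) * f s) \<le> norm (beta_bound * f s)"
      using beta_rep_nonneg[of "s + t"] beta_bound_nonneg assms(2)[of s] by simp
  qed
qed

lemma forcing_integrand_integrable: "set_integrable lborel {0<..} (\<lambda>s. beta_rep (s + t) * u0_rep s)"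
  by (rule set_integrable_beta_rep_shift_mult) (auto intro: set_integrable_u0_rep u0_rep_nonneg)

lemma forcing_nonneg: "0 \<le> forcing t"
  unfolding forcing_def by (intro mult_nonneg_nonneg set_integral_nonneg) (auto simp: beta_rep_nonneg u0_rep_nonneg)

lemma forcing_le_exp: "forcing t \<le> exp (- \<mu> * t) * forcing_max"
proof -
  have "(LINT s:{0<..}|lborel. beta_rep (s + t) * u0_rep s) \<le> (LINT s:{0<..}|lborel. beta_bound * u0_rep s)"
    by (rule set_integral_mono[OF forcing_integrand_integrable])
      (use set_integrable_u0_rep[of "{0<..}"] in \<open>auto intro: mult_right_mono beta_rep_le u0_rep_nonneg\<close>)
  thus ?thesis unfolding forcing_def forcing_max_def by simp
qed

lemma forcing_le: "0 \<le> t \<Longrightarrow> forcing t \<le> forcing_max"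
proof -
  assume "0 \<le> t"
  hence "exp (- \<mu> * t) * forcing_max \<le> 1 * forcing_max"
    using mu beta_bound_nonneg set_integral_nonneg[of "{0<..}" u0_rep lborel] u0_rep_nonneg
    by (intro mult_right_mono) (auto simp: forcing_max_def)
  thus ?thesis using forcing_le_exp[of t] by simp
qed

lemma tendsto_forcing: "(forcing \<longlongrightarrow> 0) at_top"
proof (rule tendsto_sandwich[of "\<lambda>_. 0" _ _ "\<lambda>t. exp (- \<mu> * t) * forcing_max"])
  show "((\<lambda>t. exp (- \<mu> * t) * forcing_max) \<longlongrightarrow> 0) at_top"
    using tendsto_mult[OF tendsto_exp_neg_mult_at_top[OF mu] tendsto_const] by simp
qed (use forcing_nonneg forcing_le_exp in \<open>auto intro: always_eventually\<close>)

lemma forcing_eq: "0 \<le> t \<Longrightarrow> (LINT a:{t<..}|lborel. \<beta> a * exp (- \<mu> * t) * u0 (a - t)) = forcing t"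
proof -
  assume t: "0 \<le> t"
  have "(LINT a:{t<..}|lborel. \<beta> a * exp (- \<mu> * t) * u0 (a - t))
      = (LINT s:{0<..}|lborel. exp (- \<mu> * t) * (\<beta> (s + t) * u0 s))"
    unfolding set_integral_shift_Ioi[of t] by (simp add: mult_ac)
  also have "\<dots> = exp (- \<mu> * t) * (LINT s:{0<..}|lborel. \<beta> (s + t) * u0 s)" by simp
  also have "(LINT s:{0<..}|lborel. \<beta> (s + t) * u0 s) = (LINT s:{0<..}|lborel. beta_rep (s + t) * u0_rep s)"
  proof -
    have "(\<lambda>s. \<beta> (s + t) * (indicator {0<..} s * u0 s)) \<in> borel_measurable borel" by measurable
    moreover have "(\<lambda>s. \<beta> (s + t) * (indicator {0<..} s * u0 s)) = (\<lambda>s. indicator {0<..} s *\<^sub>R (\<beta> (s + t) * u0 s))"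
      by (auto simp: fun_eq_iff indicator_def)
    moreover have "AE s in lborel. indicator {0<..} s *\<^sub>R (\<beta> (s + t) * u0 s) = indicator {0<..} s *\<^sub>R (beta_rep (s + t) * u0_rep s)"
      using AE_beta_rep_shift_eq[OF t] AE_u0_rep_eq by eventually_elim (auto simp: indicator_def)
    ultimately show ?thesis unfolding set_lebesgue_integral_def by (intro integral_cong_AE) auto
  qed
  finally show ?thesis unfolding forcing_def .
qed

lemma b_cont: "continuous_on {0..} b"
  using b_sol unfolding renewal_sol_def by auto

lemma conv_eq:
  assumes t: "0 \<le> t"
  shows "(LINT a:{0..t}|lborel. \<beta> a * exp (- \<mu> * a) * b (t - a)) = (LINT a:{0..t}|lborel. kernel a * b (t - a))"
proof -
  have "continuous_on {0..t} (\<lambda>a. b (t - a))"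
    by (rule continuous_on_compose2[OF b_cont]) (auto intro: continuous_intros)
  hence [measurable]: "(\<lambda>a. indicator {0..t} a *\<^sub>R b (t - a)) \<in> borel_measurable borel"
    by (intro borel_measurable_continuous_on_indicator) auto
  have "(\<lambda>a. indicator {0..t} a *\<^sub>R (f a * b (t - a))) = (\<lambda>a. f a * (indicator {0..t} a *\<^sub>R b (t - a)))" for f
    by (auto simp: fun_eq_iff indicator_def)
  moreover have "(\<lambda>a. \<beta> a * exp (- \<mu> * a) * (indicator {0..t} a *\<^sub>R b (t - a))) \<in> borel_measurable borel"
    "(\<lambda>a. kernel a * (indicator {0..t} a *\<^sub>R b (t - a))) \<in> borel_measurable borel" by measurable
  moreover have "AE a in lborel. indicator {0..t} a *\<^sub>R (\<beta> a * exp (- \<mu> * a) * b (t - a))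
      = indicator {0..t} a *\<^sub>R (kernel a * b (t - a))"
    using AE_beta_rep_eq AE_lborel_singleton[of 0] by eventually_elim (auto simp: indicator_def kernel_def)
  ultimately show ?thesis unfolding set_lebesgue_integral_def by (intro integral_cong_AE) auto
qed

sublocale R: ricker_renewal \<alpha> beta_bound forcing_max kernel forcing b
proof unfold_locales
  show "b t = \<alpha> * ricker (forcing t + (LINT a:{0..t}|lborel. kernel a * b (t - a)))" if "0 \<le> t" for t
    using b_sol forcing_eq[OF that] conv_eq[OF that] that unfolding renewal_sol_def by auto
qed (simp_all add: alpha kernel_nonneg kernel_le kernel_nonpos_eq_0 kernel_integrable kernel_integral
      forcing_nonneg forcing_le tendsto_forcing b_cont)

end

context age_solution
begin

lemma L1_dist_u0_ubar: "L1_dist u0 ubar = (LINT a:{0<..}|lborel. \<bar>u0_rep a - ubar a\<bar>)"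
proof -
  have "(\<lambda>a. \<bar>indicator {0<..} a * u0 a - indicator {0<..} a * ubar a\<bar>) \<in> borel_measurable borel"
    by measurable
  moreover have "(\<lambda>a. \<bar>indicator {0<..} a * u0 a - indicator {0<..} a * ubar a\<bar>)
      = (\<lambda>a. indicator {0<..} a *\<^sub>R \<bar>u0 a - ubar a\<bar>)"
    by (auto simp: fun_eq_iff indicator_def)
  moreover have "AE a in lborel. indicator {0<..} a *\<^sub>R \<bar>u0 a - ubar a\<bar> = indicator {0<..} a *\<^sub>R \<bar>u0_rep a - ubar a\<bar>"
    using AE_u0_rep_eq by eventually_elim (auto simp: indicator_def)
  ultimately show ?thesis unfolding L1_dist_def set_lebesgue_integral_def by (intro integral_cong_AE) auto
qed

lemma kernel_tail_eq:
  "R.L * (LINT a:{s<..}|lborel. kernel a) = exp (- \<mu> * s) * (LINT \<sigma>:{0<..}|lborel. beta_rep (\<sigma> + s) * ubar \<sigma>)"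
proof -
  have "R.L * kernel (\<sigma> + s) = exp (- \<mu> * s) * (beta_rep (\<sigma> + s) * ubar \<sigma>)" for \<sigma>
    unfolding kernel_def ubar_def R.L_def by (simp add: algebra_simps flip: exp_add)
  thus ?thesis unfolding set_integral_shift_Ioi[of s kernel] by (simp flip: set_integral_mult_right)
qed

text \<open>\<open>L (1 - K(s))\<close> is the forcing produced by the equilibrium \<open>ubar\<close> as initial datum.\<close>

lemma forcing_dev_le:
  assumes s: "0 \<le> s"
  shows "\<bar>forcing s - R.L * (1 - R.K s)\<bar> \<le> beta_bound * L1_dist u0 ubar"
proof -
  have ubar_int: "set_integrable lborel {0<..} (\<lambda>\<sigma>. beta_rep (\<sigma> + s) * ubar \<sigma>)"
    by (rule set_integrable_beta_rep_shift_mult[OF set_integrable_ubar])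
      (use alpha in \<open>auto simp: ubar_def\<close>)
  define D where "D \<sigma> = beta_rep (\<sigma> + s) * u0_rep \<sigma> - beta_rep (\<sigma> + s) * ubar \<sigma>" for \<sigma>
  have D_int: "set_integrable lborel {0<..} D"
    unfolding D_def by (rule set_integral_diff(1)[OF forcing_integrand_integrable ubar_int])
  have "1 - R.K s = (LINT a:{s<..}|lborel. kernel a)" using R.K_plus_tail[OF s] by simp
  hence "forcing s - R.L * (1 - R.K s) = forcing s - R.L * (LINT a:{s<..}|lborel. kernel a)"
    by simp
  also have "\<dots> = exp (- \<mu> * s) * (LINT \<sigma>:{0<..}|lborel. D \<sigma>)"
    unfolding kernel_tail_eq forcing_def D_def
      set_integral_diff(2)[OF forcing_integrand_integrable ubar_int] by (simp add: right_diff_distrib)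
  finally have "\<bar>forcing s - R.L * (1 - R.K s)\<bar> \<le> \<bar>LINT \<sigma>:{0<..}|lborel. D \<sigma>\<bar>"
    using s mu by (simp add: abs_mult mult_left_le_one_le)
  also have "\<dots> \<le> (LINT \<sigma>:{0<..}|lborel. \<bar>D \<sigma>\<bar>)"
    using set_integral_norm_bound[OF D_int] by simp
  also have "\<dots> \<le> (LINT \<sigma>:{0<..}|lborel. beta_bound * \<bar>u0_rep \<sigma> - ubar \<sigma>\<bar>)"
  proof (rule set_integral_mono)
    show "set_integrable lborel {0<..} (\<lambda>\<sigma>. \<bar>D \<sigma>\<bar>)" by (rule set_integrable_abs[OF D_int])
    show "set_integrable lborel {0<..} (\<lambda>\<sigma>. beta_bound * \<bar>u0_rep \<sigma> - ubar \<sigma>\<bar>)"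
      using set_integrable_abs[OF set_integral_diff(1)[OF set_integrable_u0_rep[of "{0<..}"] set_integrable_ubar]]
      by (intro set_integrable_mult_right) auto
    fix \<sigma>
    have "\<bar>D \<sigma>\<bar> = beta_rep (\<sigma> + s) * \<bar>u0_rep \<sigma> - ubar \<sigma>\<bar>"
      unfolding D_def using beta_rep_nonneg by (simp add: abs_mult flip: right_diff_distrib)
    also have "\<dots> \<le> beta_bound * \<bar>u0_rep \<sigma> - ubar \<sigma>\<bar>" using beta_rep_le by (rule mult_right_mono) simp
    finally show "\<bar>D \<sigma>\<bar> \<le> beta_bound * \<bar>u0_rep \<sigma> - ubar \<sigma>\<bar>" .
  qed
  finally show ?thesis using L1_dist_u0_ubar by simp
qed

lemma kernel_tail_pos:
  assumes s: "0 < s" "ereal s < a_star \<mu> \<beta>"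
  shows "0 < (LINT a:{s<..}|lborel. kernel a)"
proof -
  obtain a where a: "0 < a" "0 < (LINT \<sigma>:{a<..}|lborel. \<beta> \<sigma> * exp (- \<mu> * \<sigma>))" "s < a"
    using s(2) unfolding a_star_def less_SUP_iff by auto
  have "(LINT \<sigma>:{a<..}|lborel. \<beta> \<sigma> * exp (- \<mu> * \<sigma>)) = (LINT \<sigma>:{a<..}|lborel. kernel \<sigma>)"
  proof (rule set_lebesgue_integral_cong_AE)
    show "AE x\<in>{a<..} in lborel. \<beta> x * exp (- \<mu> * x) = kernel x"
      using AE_beta_rep_eq by eventually_elim (use a in \<open>auto simp: kernel_def\<close>)
  qed auto
  also have "\<dots> \<le> (LINT \<sigma>:{s<..}|lborel. kernel \<sigma>)"
    by (rule set_integral_subset_mono[OF set_integrable_kernel]) (use a kernel_nonneg in auto)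
  finally show ?thesis using a by simp
qed

end

context age_solution
begin

lemma nn_integral_u0_kernel_eq_0:
  assumes "0 < t \<Longrightarrow> forcing t = 0"
  shows "(\<integral>\<^sup>+ s. ennreal (indicator {0<..} t * (indicator {0<..} s * (u0_rep s * kernel (t + s)))) \<partial>lborel) = 0"
proof (cases "0 < t")
  case True
  have "(\<integral>\<^sup>+ s. ennreal (indicator {0<..} t * (indicator {0<..} s * (u0_rep s * kernel (t + s)))) \<partial>lborel)
      \<le> (\<integral>\<^sup>+ s. ennreal (indicator {0<..} s *\<^sub>R (beta_rep (s + t) * u0_rep s)) \<partial>lborel)"
  proof (intro nn_integral_mono ennreal_leI)
    fix s
    have "u0_rep s * kernel (t + s) \<le> beta_rep (s + t) * u0_rep s"
      using kernel_le_beta_rep[of "t + s"] u0_rep_nonneg[of s] by (simp add: add.commute mult.commute mult_left_mono)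
    thus "indicator {0<..} t * (indicator {0<..} s * (u0_rep s * kernel (t + s)))
        \<le> indicator {0<..} s *\<^sub>R (beta_rep (s + t) * u0_rep s)"
      by (simp add: indicator_def beta_rep_nonneg u0_rep_nonneg)
  qed
  also have "\<dots> = ennreal (LINT s:{0<..}|lborel. beta_rep (s + t) * u0_rep s)"
    unfolding set_lebesgue_integral_def
    by (rule nn_integral_eq_integral)
      (use forcing_integrand_integrable[of t] beta_rep_nonneg u0_rep_nonneg in \<open>auto simp: set_integrable_def\<close>)
  also have "\<dots> = 0" using assms True by (simp add: forcing_def)
  finally show ?thesis by simp
qed simp

text \<open>If the initial population produced no births at all, Tonelli's theorem applied to
  \<open>u\<^sub>0(s) k(t + s)\<close> would force \<open>u\<^sub>0 = 0\<close> a.e. on \<open>(0, a\<^sup>\<star>)\<close>, where the tail of \<open>k\<close> is positive.\<close>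

lemma AE_u0_rep_zero_if_forcing_vanishes:
  assumes zero: "\<And>t. 0 < t \<Longrightarrow> forcing t = 0"
  shows "AE s in lborel. 0 < s \<and> ereal s < a_star \<mu> \<beta> \<longrightarrow> u0_rep s = 0"
proof -
  define g where "g s t = ennreal (indicator {0<..} t * (indicator {0<..} s * (u0_rep s * kernel (t + s))))" for s t
  have g_borel: "case_prod g \<in> borel_measurable (lborel \<Otimes>\<^sub>M lborel)"
    unfolding g_def case_prod_unfold by measurable
  have "(\<integral>\<^sup>+ s. (\<integral>\<^sup>+ t. g s t \<partial>lborel) \<partial>lborel) = (\<integral>\<^sup>+ t. (\<integral>\<^sup>+ s. g s t \<partial>lborel) \<partial>lborel)"
    by (rule lborel_pair.Fubini'[symmetric, OF g_borel])
  also have "\<dots> = 0" using nn_integral_u0_kernel_eq_0[OF zero] by (simp add: g_def)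
  finally have "AE s in lborel. (\<integral>\<^sup>+ t. g s t \<partial>lborel) = 0"
    using lborel.borel_measurable_nn_integral[OF g_borel] by (simp add: nn_integral_0_iff_AE)
  thus ?thesis
  proof eventually_elim
    case (elim s)
    show ?case
    proof (rule impI, rule ccontr)
      assume s: "0 < s \<and> ereal s < a_star \<mu> \<beta>" and "u0_rep s \<noteq> 0"
      hence u0_pos: "0 < u0_rep s" using u0_rep_nonneg[of s] by simp
      have "(\<lambda>t. g s t) \<in> borel_measurable lborel" unfolding g_def by measurable
      from iffD1[OF nn_integral_0_iff_AE[OF this] elim] have "AE t in lborel. g s t = 0" .
      hence "AE t in lborel. indicator {0<..} t *\<^sub>R kernel (t + s) = 0"
      proof eventually_elim
        case (elim t)
        have "0 \<le> indicator {0<..} t * (indicator {0<..} s * (u0_rep s * kernel (t + s)))"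
          using u0_rep_nonneg kernel_nonneg by simp
        hence "indicator {0<..} t * (indicator {0<..} s * (u0_rep s * kernel (t + s))) = 0"
          using elim unfolding g_def by simp
        thus ?case using s u0_pos by (simp add: indicator_def split: if_splits)
      qed
      hence "(LINT t:{0<..}|lborel. kernel (t + s)) = 0"
        unfolding set_lebesgue_integral_def by (rule integral_eq_zero_AE)
      thus False using kernel_tail_pos[of s] s unfolding set_integral_shift_Ioi[of s kernel] by (simp add: add.commute)
    qed
  qed
qed

lemma forcing_pos: "\<exists>t1>0. 0 < forcing t1"
proof (rule ccontr)
  assume "\<not> (\<exists>t1>0. 0 < forcing t1)"
  hence "forcing t \<le> 0" if "0 < t" for t using that by (meson not_less)
  hence "forcing t = 0" if "0 < t" for t using that forcing_nonneg[of t] by (simp add: order.antisym)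
  hence "AE s in lborel. 0 < s \<and> ereal s < a_star \<mu> \<beta> \<longrightarrow> u0_rep s = 0"
    by (rule AE_u0_rep_zero_if_forcing_vanishes)
  hence "AE s in lborel. indicator {a. 0 < a \<and> ereal a < a_star \<mu> \<beta>} s *\<^sub>R u0 s = 0"
    using AE_u0_rep_eq by eventually_elim (auto simp: indicator_def)
  hence "(LINT a:{a. 0 < a \<and> ereal a < a_star \<mu> \<beta>}|lborel. u0 a) = 0"
    unfolding set_lebesgue_integral_def by (rule integral_eq_zero_AE)
  thus False using u0 unfolding M0_hat_def by simp
qed

end

context age_solution
begin

lemma b_tendsto_ln_alpha: "(b \<longlongrightarrow> ln \<alpha>) at_top"
  using R.b_tendsto_L forcing_pos unfolding R.L_def by blast

lemma tendsto_L1_dist_age_sol: "((\<lambda>t. L1_dist (age_sol \<mu> u0 b t) ubar) \<longlongrightarrow> 0) at_top"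
proof -
  define dev where "dev t = (LINT a:{0<..t}|lborel. exp (- \<mu> * a) * \<bar>b (t - a) - ln \<alpha>\<bar>)" for t
  have "\<bar>b t - ln \<alpha>\<bar> \<le> R.b_max + ln \<alpha>" if "0 \<le> t" for t
    using R.b_nonneg[OF that] R.b_le_b_max[OF that] ln_gt_zero[OF alpha(1)] by (simp add: abs_le_iff)
  hence "(dev \<longlongrightarrow> 0) at_top"
    unfolding dev_def by (rule tendsto_exp_weighted_deviation[OF mu b_cont b_tendsto_ln_alpha])
  moreover have "((\<lambda>t. exp (- \<mu> * t) * L1_dist u0 ubar) \<longlongrightarrow> 0) at_top"
    using tendsto_mult[OF tendsto_exp_neg_mult_at_top[OF mu] tendsto_const] by simp
  ultimately have lim: "((\<lambda>t. exp (- \<mu> * t) * L1_dist u0 ubar + dev t) \<longlongrightarrow> 0) at_top"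
    using tendsto_add by fastforce
  have upper: "\<forall>\<^sub>F t in at_top. L1_dist (age_sol \<mu> u0 b t) ubar \<le> exp (- \<mu> * t) * L1_dist u0 ubar + dev t"
    using L1_dist_age_sol_le[OF _ b_cont, where L = "ln \<alpha>" and \<mu> = \<mu> and u = u0]
    by (intro eventually_at_top_linorderI[of 0]) (simp add: dev_def ubar_def[abs_def])
  show ?thesis by (rule tendsto_sandwich[OF _ upper tendsto_const lim]) (simp add: L1_dist_nonneg)
qed

lemma b_stays_near_ln_alpha:
  assumes e: "2 * e < ln \<alpha>"
    and \<theta>: "\<forall>y. e \<le> \<bar>y - ln \<alpha>\<bar> \<and> \<bar>y - ln \<alpha>\<bar> \<le> 2 * e \<longrightarrow> \<bar>\<alpha> * ricker y - ln \<alpha>\<bar> \<le> \<bar>y - ln \<alpha>\<bar> - \<theta>"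
    and d: "d < \<theta>" "d \<le> e" "beta_bound * L1_dist u0 ubar \<le> d"
  shows "\<forall>t\<ge>0. \<bar>b t - ln \<alpha>\<bar> < e"
  using R.b_stays_near_L[of e \<theta> d] forcing_dev_le order_trans[OF _ d(3)] assms
  unfolding R.L_def by blast

end

context birth_kernel
begin

lemma age_solutionI: "u0 \<in> M0_hat \<mu> \<beta> \<Longrightarrow> renewal_sol \<mu> \<alpha> \<beta> u0 b \<Longrightarrow> age_solution \<mu> \<alpha> C0 \<beta> u0 b"
  by (intro age_solution.intro birth_kernel_axioms age_solution_axioms.intro)

lemma locally_stable:
  "\<forall>\<epsilon>>0. \<exists>\<delta>>0. \<forall>u0 b. u0 \<in> M0_hat \<mu> \<beta> \<and> renewal_sol \<mu> \<alpha> \<beta> u0 b \<and> L1_dist u0 ubar < \<delta> \<longrightarrow>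
     (\<forall>t\<ge>0. L1_dist (age_sol \<mu> u0 b t) ubar < \<epsilon>)"
proof (intro allI impI)
  fix \<epsilon> :: real assume \<epsilon>: "0 < \<epsilon>"
  define e where "e = min (\<epsilon> * \<mu> / 4) (ln \<alpha> / 3)"
  have "e \<le> \<epsilon> * \<mu> / 4" "e \<le> ln \<alpha> / 3" by (simp_all add: e_def)
  hence e: "0 < e" "2 * e < ln \<alpha>" "e / \<mu> \<le> \<epsilon> / 4"
    using \<epsilon> mu ln_gt_zero[OF alpha(1)] by (auto simp: e_def pos_divide_le_eq)
  obtain \<theta> where \<theta>: "0 < \<theta>"
    "\<forall>y. e \<le> \<bar>y - ln \<alpha>\<bar> \<and> \<bar>y - ln \<alpha>\<bar> \<le> 2 * e \<longrightarrow> \<bar>\<alpha> * ricker y - ln \<alpha>\<bar> \<le> \<bar>y - ln \<alpha>\<bar> - \<theta>"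
    using ricker_dist_fixpoint_annulus[OF alpha e(1,2)] by blast
  define d where "d = min (\<theta> / 2) e"
  have d: "0 < d" "d < \<theta>" "d \<le> e" using \<theta> e by (auto simp: d_def)
  define \<delta> where "\<delta> = min (\<epsilon> / 2) (d / (beta_bound + 1))"
  have \<delta>: "0 < \<delta>" "\<delta> \<le> \<epsilon> / 2" "beta_bound * \<delta> \<le> d"
    using \<epsilon> d beta_bound_nonneg by (auto simp: \<delta>_def min_def field_simps)
  have "\<forall>t\<ge>0. L1_dist (age_sol \<mu> u0 b t) ubar < \<epsilon>"
    if u0: "u0 \<in> M0_hat \<mu> \<beta>" "renewal_sol \<mu> \<alpha> \<beta> u0 b" and close: "L1_dist u0 ubar < \<delta>" for u0 b
  proof (intro allI impI)
    fix t :: real assume t: "0 \<le> t"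
    interpret age_solution \<mu> \<alpha> C0 \<beta> u0 b using age_solutionI[OF u0] .
    have "beta_bound * L1_dist u0 ubar \<le> d"
      using mult_left_mono[OF less_imp_le[OF close] beta_bound_nonneg] \<delta> by simp
    hence "\<forall>s\<ge>0. \<bar>b s - ln \<alpha>\<bar> < e" by (rule b_stays_near_ln_alpha[OF e(2) \<theta>(2) d(2,3)])
    hence "(LINT a:{0<..t}|lborel. exp (- \<mu> * a) * \<bar>b (t - a) - ln \<alpha>\<bar>) \<le> e / \<mu>"
      using set_integral_exp_weighted_deviation_le[OF mu t b_cont] by (simp add: less_imp_le)
    moreover have "exp (- \<mu> * t) * L1_dist u0 ubar \<le> L1_dist u0 ubar"
      using mu t L1_dist_nonneg[of u0 ubar] by (simp add: mult_left_le_one_le)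
    moreover have "L1_dist (age_sol \<mu> u0 b t) ubar
        \<le> exp (- \<mu> * t) * L1_dist u0 ubar + (LINT a:{0<..t}|lborel. exp (- \<mu> * a) * \<bar>b (t - a) - ln \<alpha>\<bar>)"
      using L1_dist_age_sol_le[OF t b_cont, where L = "ln \<alpha>" and \<mu> = \<mu> and u = u0]
      unfolding ubar_def[abs_def] .
    ultimately show "L1_dist (age_sol \<mu> u0 b t) ubar < \<epsilon>" using close \<delta>(2) e(3) \<epsilon> by linarith
  qed
  thus "\<exists>\<delta>>0. \<forall>u0 b. u0 \<in> M0_hat \<mu> \<beta> \<and> renewal_sol \<mu> \<alpha> \<beta> u0 b \<and> L1_dist u0 ubar < \<delta> \<longrightarrow>
      (\<forall>t\<ge>0. L1_dist (age_sol \<mu> u0 b t) ubar < \<epsilon>)"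
    using \<delta>(1) by blast
qed

lemma attractive:
  "u0 \<in> M0_hat \<mu> \<beta> \<Longrightarrow> renewal_sol \<mu> \<alpha> \<beta> u0 b \<Longrightarrow>
     ((\<lambda>t. L1_dist (age_sol \<mu> u0 b t) ubar) \<longlongrightarrow> 0) at_top"
  using age_solution.tendsto_L1_dist_age_sol[OF age_solutionI] by blast

end

theorem theorem6p5:
  fixes \<mu> \<alpha> :: real and \<beta> :: "real \<Rightarrow> real"
  assumes mu_pos: "\<mu> > 0"
    and alpha: "1 < \<alpha>" "\<alpha> \<le> exp 2"
    and beta_meas: "\<beta> \<in> borel_measurable lborel"
    and beta_Linf: "\<exists>C. AE a in lborel. 0 < a \<longrightarrow> 0 \<le> \<beta> a \<and> \<beta> a \<le> C"
    and beta_norm: "(LINT a:{0<..}|lborel. \<beta> a * exp (- \<mu> * a)) = 1"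
  defines "ubar \<equiv> (\<lambda>a. ln \<alpha> * exp (- \<mu> * a))"
  shows
    "(\<forall>\<epsilon>>0. \<exists>\<delta>>0. \<forall>u0 b. u0 \<in> M0_hat \<mu> \<beta> \<and> renewal_sol \<mu> \<alpha> \<beta> u0 b
          \<and> L1_dist u0 ubar < \<delta> \<longrightarrow>
          (\<forall>t\<ge>0. L1_dist (age_sol \<mu> u0 b t) ubar < \<epsilon>))
     \<and> (\<forall>u0 b. u0 \<in> M0_hat \<mu> \<beta> \<and> renewal_sol \<mu> \<alpha> \<beta> u0 b \<longrightarrow>
          ((\<lambda>t. L1_dist (age_sol \<mu> u0 b t) ubar) \<longlongrightarrow> 0) at_top)"
proof -
  obtain C0 where "AE a in lborel. 0 < a \<longrightarrow> 0 \<le> \<beta> a \<and> \<beta> a \<le> C0" using beta_Linf by blast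
  then interpret K: birth_kernel \<mu> \<alpha> C0 \<beta>
    using mu_pos alpha beta_meas beta_norm by unfold_locales
  have "ubar = K.ubar" unfolding ubar_def K.ubar_def[abs_def] ..
  thus ?thesis using K.locally_stable K.attractive by blast
qed

end
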